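(* In the setting described in the context, assume the problem is extremely ill-posed, i.e. $a_k\asymp e^{-pk^s}$ as $k\to\infty$ with $p>0$ and $s\ge1$, and let $\beta>0$. Take $\lambda_k=\rho_n^2k^{-1-2\alpha}$ with $\alpha>0$ and any positive sequence $\rho_n$ with $\rho_n^2n\to\infty$. Then for any $K>0$ and any $M_n\to\infty$, \[\sup_{f_0\in S^\beta:\|f_0\|_\beta\le K}\mathbb{E}_{f_0}\Pi_n\big(f:\|f-f_0\|_{H_1}\ge M_n\varepsilon_n\mid U^n\big)\to 0,\] where \[\varepsilon_n=\varepsilon_{n,1}\vee\varepsilon_{n,2}=(\log(\rho_n^2n))^{-\beta/s}\vee\rho_n(\log(\rho_n^2n))^{-\alpha/s}.\] In particular: (i) if $\rho_n=1$, then $\varepsilon_n=(\log n)^{-(\alpha\wedge\beta)/s}$; (ii) if $n^{-1/2+\delta}\lesssim\rho_n\lesssim(\log n)^{(\alpha-\beta)/s}$ for some $\delta>0$, then $\varepsilon_n=(\log n)^{-\beta/s}$. Furthermore, if instead $\lambda_k=\exp(-\alpha k^s)$ with $\alpha>0$, the same convergence holds with $\varepsilon_n=(\log n)^{-\beta/s}$.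
   Context: Let $H_1,H_2\subset L^2([0,1])$ be Hilbert spaces of functions on $[0,1]$ and $A:H_1\to H_2$ an injective compact linear operator. Let $\{\varphi_k\}_{k\ge1}$ be an orthonormal eigenbasis of $A^*A$ in $H_1$, $A^*A\varphi_k=a_k^2\varphi_k$ with $a_k>0$, and let $\psi_k:=A\varphi_k/a_k$ (an orthonormal system, $A\varphi_k=a_k\psi_k$). For $f\in H_1$ write $f_k=\langle f,\varphi_k\rangle$, identify $f$ with $(f_k)_k$, so $\|f\|_{H_1}^2=\sum_kf_k^2$. For $\beta\ge0$, $S^\beta$ is the set of $f=\sum_kf_k\varphi_k$ with $\|f\|_\beta:=(\sum_k f_k^2k^{2\beta})^{1/2}<\infty$. Observations: for $n\ge2$, design points $x_i=i/n$, and $Y_i=Af(x_i)+\xi_i$, $i=1,\dots,n$, with $\xi_i$ i.i.d. $\mathcal N(0,1)$ ($Af$ continuous). Put $\langle g,h\rangle_d:=\frac1n\sum_{i=1}^ng(x_i)h(x_i)$. Standing assumption on the conjugate basis: (i) $\langle\psi_j,\psi_k\rangle_d=\delta_{jk}$ for $1\le j,k\le n-1$; (ii) for $1\le k\le n-1$ and fixed $l\in\mathbb N$, among $j\in\{ln,\dots,(l+1)n-1\}$ there is exactly one $\tilde j=ln+\bar k$ ($\bar k$ depending only on the parity of $l$) with $0<|\langle\psi_{\tilde j},\psi_k\rangle_d|<M$ for a fixed constant $M$, and $\langle\psi_j,\psi_k\rangle_d=0$ for all other such $j$. Transformed data: $U_k:=\frac1n\sum_{i=1}^nY_i\psi_k(x_i)$,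 $k=1,\dots,n-1$, $U^n=(U_1,\dots,U_{n-1})$; thus $U_k=a_kf_k+R_k(f)+\zeta_k/\sqrt n$ with $R_k(f)=\langle A\sum_{j\ge n}f_j\varphi_j,\psi_k\rangle_d$ and $\zeta_k=n^{-1/2}\sum_{i=1}^n\xi_i\psi_k(x_i)$. $\mathbb E_{f_0}$ denotes expectation when the data are generated with $f=f_0$. Prior: $f_k\sim\mathcal N(0,\lambda_k)$ independently for $k<n$, $f_k=0$ for $k\ge n$, independent of the noise. The posterior is $\Pi_n(\cdot\mid U^n)=\bigotimes_{k\in\mathbb N}\mathcal N(\hat f_k,\sigma_k^2)$ (on coefficients) with $\hat f_k=\frac{na_k\lambda_k\mathbf 1\{k<n\}}{na_k^2\lambda_k+1}U_k$, $\sigma_k^2=\frac{\lambda_k\mathbf 1\{k<n\}}{na_k^2\lambda_k+1}$. Notation: $a\vee b=\max$, $a\wedge b=\min$; $a_n\lesssim b_n$ means $a_n\le Cb_n$ for a constant $C$; $a_n\asymp b_n$ means $a_n/b_n$ is bounded away from $0$ and $\infty$. *)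

theory Defs
  imports "HOL-Probability.Probability" "HOL-Library.Landau_Symbols"
begin

text \<open>Coefficient sequences are indexed by k = 1,2,...; the value at index 0 is ignored.\<close>

definition Sb_norm :: "real \<Rightarrow> (nat \<Rightarrow> real) \<Rightarrow> real" where
  "Sb_norm \<beta> f = sqrt (\<Sum>k. (f (Suc k))\<^sup>2 * real (Suc k) powr (2 * \<beta>))"

definition in_Sb :: "real \<Rightarrow> (nat \<Rightarrow> real) \<Rightarrow> bool" where
  "in_Sb \<beta> f \<longleftrightarrow> summable (\<lambda>k. (f (Suc k))\<^sup>2 * real (Suc k) powr (2 * \<beta>))"

definition H1_norm :: "(nat \<Rightarrow> real) \<Rightarrow> real" where
  "H1_norm h = sqrt (\<Sum>k. (h (Suc k))\<^sup>2)"

definition design_pt :: "nat \<Rightarrow> nat \<Rightarrow> real" where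
  "design_pt n i = real i / real n"

definition ip_d :: "nat \<Rightarrow> (real \<Rightarrow> real) \<Rightarrow> (real \<Rightarrow> real) \<Rightarrow> real" where
  "ip_d n g h = (1 / real n) * (\<Sum>i=1..n. g (design_pt n i) * h (design_pt n i))"

definition A_eval :: "(nat \<Rightarrow> real) \<Rightarrow> (nat \<Rightarrow> real \<Rightarrow> real) \<Rightarrow> (nat \<Rightarrow> real) \<Rightarrow> real \<Rightarrow> real" where
  "A_eval a \<psi> f x = (\<Sum>j. f (Suc j) * a (Suc j) * \<psi> (Suc j) x)"

definition U_data :: "(nat \<Rightarrow> real) \<Rightarrow> (nat \<Rightarrow> real \<Rightarrow> real) \<Rightarrow> nat \<Rightarrow> (nat \<Rightarrow> real)
    \<Rightarrow> (nat \<Rightarrow> real) \<Rightarrow> nat \<Rightarrow> real" where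
  "U_data a \<psi> n f0 \<xi> k = (1 / real n) *
     (\<Sum>i=1..n. (A_eval a \<psi> f0 (design_pt n i) + \<xi> i) * \<psi> k (design_pt n i))"

text \<open>Posterior mean and variance (for 1 <= k < n); lam n k is the prior variance lambda_k.\<close>
definition post_mean :: "(nat \<Rightarrow> real) \<Rightarrow> (nat \<Rightarrow> real \<Rightarrow> real) \<Rightarrow> (nat \<Rightarrow> nat \<Rightarrow> real) \<Rightarrow> nat
    \<Rightarrow> (nat \<Rightarrow> real) \<Rightarrow> (nat \<Rightarrow> real) \<Rightarrow> nat \<Rightarrow> real" where
  "post_mean a \<psi> lam n f0 \<xi> k =
     real n * a k * lam n k / (real n * (a k)\<^sup>2 * lam n k + 1) * U_data a \<psi> n f0 \<xi> k"

definition post_var :: "(nat \<Rightarrow> real) \<Rightarrow> (nat \<Rightarrow> nat \<Rightarrow> real) \<Rightarrow> nat \<Rightarrow> nat \<Rightarrow> real" where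
  "post_var a lam n k = lam n k / (real n * (a k)\<^sup>2 * lam n k + 1)"

text \<open>Posterior law of the nontrivial coordinates f_1..f_{n-1} (the others are 0 a.s.).\<close>
definition posterior :: "(nat \<Rightarrow> real) \<Rightarrow> (nat \<Rightarrow> real \<Rightarrow> real) \<Rightarrow> (nat \<Rightarrow> nat \<Rightarrow> real) \<Rightarrow> nat
    \<Rightarrow> (nat \<Rightarrow> real) \<Rightarrow> (nat \<Rightarrow> real) \<Rightarrow> (nat \<Rightarrow> real) measure" where
  "posterior a \<psi> lam n f0 \<xi> = (\<Pi>\<^sub>M k\<in>{1..<n}.
      density lborel (normal_density (post_mean a \<psi> lam n f0 \<xi> k) (sqrt (post_var a lam n k))))"

definition extend_draw :: "nat \<Rightarrow> (nat \<Rightarrow> real) \<Rightarrow> nat \<Rightarrow> real" where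
  "extend_draw n g k = (if 1 \<le> k \<and> k < n then g k else 0)"

definition post_mass :: "(nat \<Rightarrow> real) \<Rightarrow> (nat \<Rightarrow> real \<Rightarrow> real) \<Rightarrow> (nat \<Rightarrow> nat \<Rightarrow> real) \<Rightarrow> nat
    \<Rightarrow> (nat \<Rightarrow> real) \<Rightarrow> (nat \<Rightarrow> real) \<Rightarrow> real \<Rightarrow> real" where
  "post_mass a \<psi> lam n f0 \<xi> r = measure (posterior a \<psi> lam n f0 \<xi>)
     {g \<in> space (posterior a \<psi> lam n f0 \<xi>). H1_norm (\<lambda>k. extend_draw n g k - f0 k) \<ge> r}"

definition noise :: "nat \<Rightarrow> (nat \<Rightarrow> real) measure" where
  "noise n = (\<Pi>\<^sub>M i\<in>{1..n}. density lborel std_normal_density)"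

definition exp_post_mass :: "(nat \<Rightarrow> real) \<Rightarrow> (nat \<Rightarrow> real \<Rightarrow> real) \<Rightarrow> (nat \<Rightarrow> nat \<Rightarrow> real) \<Rightarrow> nat
    \<Rightarrow> (nat \<Rightarrow> real) \<Rightarrow> real \<Rightarrow> real" where
  "exp_post_mass a \<psi> lam n f0 r = (\<integral>\<xi>. post_mass a \<psi> lam n f0 \<xi> r \<partial>noise n)"

definition contracts :: "(nat \<Rightarrow> real) \<Rightarrow> (nat \<Rightarrow> real \<Rightarrow> real) \<Rightarrow> real \<Rightarrow> (nat \<Rightarrow> nat \<Rightarrow> real)
    \<Rightarrow> (nat \<Rightarrow> real) \<Rightarrow> (nat \<Rightarrow> real) \<Rightarrow> real \<Rightarrow> bool" where
  "contracts a \<psi> \<beta> lam eps M K \<longleftrightarrow>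
     (\<lambda>n. SUP f0\<in>{f0. in_Sb \<beta> f0 \<and> Sb_norm \<beta> f0 \<le> K}. exp_post_mass a \<psi> lam n f0 (M n * eps n))
       \<longlonglongrightarrow> 0"

definition design_cond :: "(nat \<Rightarrow> real \<Rightarrow> real) \<Rightarrow> bool" where
  "design_cond \<psi> \<longleftrightarrow>
     (\<forall>n\<ge>2. \<forall>j k. 1 \<le> j \<and> j < n \<and> 1 \<le> k \<and> k < n \<longrightarrow>
        ip_d n (\<psi> j) (\<psi> k) = (if j = k then 1 else 0)) \<and>
     (\<exists>M>0. \<forall>n\<ge>2. \<forall>k. 1 \<le> k \<and> k < n \<longrightarrow>
        (\<exists>kb :: bool \<Rightarrow> nat. \<forall>l\<ge>1. kb (even l) < n \<and>
           0 < \<bar>ip_d n (\<psi> (l * n + kb (even l))) (\<psi> k)\<bar> \<and>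
           \<bar>ip_d n (\<psi> (l * n + kb (even l))) (\<psi> k)\<bar> < M \<and>
           (\<forall>j. l * n \<le> j \<and> j < (l + 1) * n \<and> j \<noteq> l * n + kb (even l) \<longrightarrow>
              ip_d n (\<psi> j) (\<psi> k) = 0)))"

end

theory Submission
  imports Defs
begin

text \<open>
  Conditionally on the data the posterior is Gaussian and independent across coordinates, so by
  Markov's inequality the posterior mass outside a ball of radius \<open>r\<close> around \<open>f\<^sub>0\<close> is at most
  the posterior mean of \<open>\<parallel>f - f\<^sub>0\<parallel>\<^sup>2\<close> divided by \<open>r\<^sup>2\<close>, and the expectation of that mean over
  the noise is an explicit bias--variance sum. Orthonormality of the conjugate basis on the design
  reduces the bias of coordinate \<open>k\<close> to the shrinkage term \<open>f\<^sub>k / (1 + n a\<^sub>k\<^sup>2 \<lambda>\<^sub>k)\<close> plus an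
  aliasing error from the coefficients \<open>j \<ge> n\<close>; the latter is controlled because \<open>a\<^sub>j\<close> decays
  geometrically. Balancing the shrinkage term against the posterior spread at the cut-off
  \<open>k \<approx> (log (\<rho>\<^sub>n\<^sup>2 n))\<^bsup>1/s\<^esup>\<close>, where \<open>n a\<^sub>k\<^sup>2 \<lambda>\<^sub>k\<close> crosses 1, gives the rates.
\<close>

definition tail_sum :: "(nat \<Rightarrow> real) \<Rightarrow> nat \<Rightarrow> real" where
  "tail_sum g n = (\<Sum>j. if n \<le> Suc j then g (Suc j) else 0)"

definition post_gain :: "(nat \<Rightarrow> real) \<Rightarrow> (nat \<Rightarrow> nat \<Rightarrow> real) \<Rightarrow> nat \<Rightarrow> nat \<Rightarrow> real" where
  "post_gain a lam n k = real n * a k * lam n k / (real n * (a k)\<^sup>2 * lam n k + 1)"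

text \<open>The posterior mean of \<open>\<parallel>f - f\<^sub>0\<parallel>\<^sup>2\<close>, and its expectation under the noise.\<close>

definition posterior_risk :: "(nat \<Rightarrow> real) \<Rightarrow> (nat \<Rightarrow> real \<Rightarrow> real) \<Rightarrow> (nat \<Rightarrow> nat \<Rightarrow> real) \<Rightarrow> nat
    \<Rightarrow> (nat \<Rightarrow> real) \<Rightarrow> (nat \<Rightarrow> real) \<Rightarrow> real" where
  "posterior_risk a \<psi> lam n f0 \<xi> =
     (\<Sum>k\<in>{1..<n}. (post_mean a \<psi> lam n f0 \<xi> k - f0 k)\<^sup>2 + post_var a lam n k)
     + tail_sum (\<lambda>k. (f0 k)\<^sup>2) n"

definition expected_risk :: "(nat \<Rightarrow> real) \<Rightarrow> (nat \<Rightarrow> real \<Rightarrow> real) \<Rightarrow> (nat \<Rightarrow> nat \<Rightarrow> real) \<Rightarrow> nat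
    \<Rightarrow> (nat \<Rightarrow> real) \<Rightarrow> real" where
  "expected_risk a \<psi> lam n f0 =
     (\<Sum>k\<in>{1..<n}. (post_gain a lam n k * ip_d n (A_eval a \<psi> f0) (\<psi> k) - f0 k)\<^sup>2
        + (post_gain a lam n k)\<^sup>2 / real n + post_var a lam n k)
     + tail_sum (\<lambda>k. (f0 k)\<^sup>2) n"

section \<open>Gaussian moments\<close>

lemma normal_density_square_moment:
  fixes m \<sigma> c :: real assumes "\<sigma> > 0"
  shows "integrable (density lborel (normal_density m \<sigma>)) (\<lambda>x. (x - c)\<^sup>2)"
    and "(\<integral>x. (x - c)\<^sup>2 \<partial>density lborel (normal_density m \<sigma>)) = (m - c)\<^sup>2 + \<sigma>\<^sup>2"
proof -
  have eq: "\<And>x. normal_density m \<sigma> x * (x - c)\<^sup>2 =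
     normal_density m \<sigma> x * (x - m)^(2*1) + (2*(m-c)) * (normal_density m \<sigma> x * (x - m)^(2*0+1))
     + (m-c)\<^sup>2 * normal_density m \<sigma> x"
    by (simp add: power2_eq_square algebra_simps)
  have i1: "integrable lborel (\<lambda>x. normal_density m \<sigma> x * (x - m)^(2*1))"
    and i2: "integrable lborel (\<lambda>x. normal_density m \<sigma> x * (x - m)^(2*0+1))"
    using integrable_normal_moment[OF assms] by blast+
  have i3: "integrable lborel (\<lambda>x. normal_density m \<sigma> x)"
    using integrable_normal_density[OF assms] .
  have int: "integrable lborel (\<lambda>x. normal_density m \<sigma> x * (x - c)\<^sup>2)"
    unfolding eq by (intro Bochner_Integration.integrable_add integrable_mult_right i1 i2 i3)
  show "integrable (density lborel (normal_density m \<sigma>)) (\<lambda>x. (x - c)\<^sup>2)"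
    by (subst integrable_density) (use int in auto)
  have "(\<integral>x. (x - c)\<^sup>2 \<partial>density lborel (normal_density m \<sigma>)) =
        (\<integral>x. normal_density m \<sigma> x * (x - c)\<^sup>2 \<partial>lborel)"
    by (subst integral_density) auto
  also have "\<dots> = (\<integral>x. normal_density m \<sigma> x * (x - m)^(2*1) \<partial>lborel)
     + (2*(m-c)) * (\<integral>x. normal_density m \<sigma> x * (x - m)^(2*0+1) \<partial>lborel)
     + (m-c)\<^sup>2 * (\<integral>x. normal_density m \<sigma> x \<partial>lborel)"
    unfolding eq
    by (simp only: Bochner_Integration.integral_add[OF Bochner_Integration.integrable_add[OF i1
          integrable_mult_right[OF i2]] integrable_mult_right[OF i3]]
        Bochner_Integration.integral_add[OF i1 integrable_mult_right[OF i2]] integral_mult_right_zero)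
  also have "\<dots> = \<sigma>\<^sup>2 + (m - c)\<^sup>2"
    using integral_normal_moment_even[OF assms, of m 1] integral_normal_moment_odd[OF assms, of m 0]
      integral_normal_density[OF assms]
    by (simp add: power2_eq_square)
  finally show "(\<integral>x. (x - c)\<^sup>2 \<partial>density lborel (normal_density m \<sigma>)) = (m - c)\<^sup>2 + \<sigma>\<^sup>2"
    by simp
qed

lemma std_normal_moments:
  "integrable (density lborel std_normal_density) (\<lambda>x. x)"
  "(\<integral>x. x \<partial>density lborel std_normal_density) = 0"
  "integrable (density lborel std_normal_density) (\<lambda>x. x * x)"
  "(\<integral>x. x * x \<partial>density lborel std_normal_density) = 1"
proof -
  show "integrable (density lborel std_normal_density) (\<lambda>x. x)"
    by (subst integrable_density) (use integrable_std_normal_moment[of 1] in auto)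
  show "(\<integral>x. x \<partial>density lborel std_normal_density) = 0"
    by (subst integral_density) (use integral_std_normal_moment_odd[of 0] in auto)
  show "integrable (density lborel std_normal_density) (\<lambda>x. x * x)"
    by (subst integrable_density)
      (use integrable_std_normal_moment[of 2] in \<open>auto simp: power2_eq_square\<close>)
  show "(\<integral>x. x * x \<partial>density lborel std_normal_density) = 1"
    by (subst integral_density)
      (use integral_std_normal_moment_even[of 1] in \<open>auto simp: power2_eq_square\<close>)
qed

lemma prob_space_std_normal: "prob_space (density lborel std_normal_density)"
  by (rule prob_space_normal_density) simp

interpretation std_normal_product: product_sigma_finite "\<lambda>_::nat. density lborel std_normal_density"
  unfolding product_sigma_finite_def
  using prob_space_std_normal by (simp add: prob_space_imp_sigma_finite)

lemma prob_space_noise: "prob_space (noise n)"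
  unfolding noise_def by (rule prob_space_PiM) (rule prob_space_std_normal)

lemma noise_integral_prod:
  fixes f :: "nat \<Rightarrow> real \<Rightarrow> real"
  assumes "\<And>l. integrable (density lborel std_normal_density) (f l)"
  shows "integrable (noise n) (\<lambda>x. \<Prod>l\<in>{1..n}. f l (x l))"
    and "(\<integral>x. (\<Prod>l\<in>{1..n}. f l (x l)) \<partial>noise n)
           = (\<Prod>l\<in>{1..n}. \<integral>y. f l y \<partial>density lborel std_normal_density)"
proof -
  show "integrable (noise n) (\<lambda>x. \<Prod>l\<in>{1..n}. f l (x l))"
    unfolding noise_def by (rule std_normal_product.product_integrable_prod) (use assms in auto)
  show "(\<integral>x. (\<Prod>l\<in>{1..n}. f l (x l)) \<partial>noise n)
      = (\<Prod>l\<in>{1..n}. \<integral>y. f l y \<partial>density lborel std_normal_density)"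
    unfolding noise_def by (rule std_normal_product.product_integral_prod) (use assms in auto)
qed

lemma noise_mean_zero:
  assumes "i \<in> {1..n}"
  shows "integrable (noise n) (\<lambda>x. x i)" and "(\<integral>x. x i \<partial>noise n) = 0"
proof -
  interpret prob_space "density lborel std_normal_density" by (rule prob_space_std_normal)
  define f where "f l = (\<lambda>y::real. if l = i then y else 1)" for l
  have fi: "integrable (density lborel std_normal_density) (f l)" for l
    by (cases "l = i") (simp_all add: f_def std_normal_moments(1))
  have prodeq: "(\<Prod>l\<in>{1..n}. f l (x l)) = x i" for x
    using assms by (simp add: f_def prod.delta)
  have "integrable (noise n) (\<lambda>x. \<Prod>l\<in>{1..n}. f l (x l))"
    by (rule noise_integral_prod(1)) (rule fi)
  then show "integrable (noise n) (\<lambda>x. x i)" by (simp only: prodeq)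
  have "integral\<^sup>L (density lborel std_normal_density) (f i) = 0"
    using std_normal_moments(2) by (simp add: f_def)
  have "(\<integral>x. x i \<partial>noise n) = (\<integral>x. (\<Prod>l\<in>{1..n}. f l (x l)) \<partial>noise n)"
    by (simp only: prodeq)
  also have "\<dots> = (\<Prod>l\<in>{1..n}. integral\<^sup>L (density lborel std_normal_density) (f l))"
    by (rule noise_integral_prod(2)) (rule fi)
  also have "\<dots> = 0"
    using \<open>integral\<^sup>L (density lborel std_normal_density) (f i) = 0\<close> assms
    by (metis finite_atLeastAtMost prod_zero_iff)
  finally show "(\<integral>x. x i \<partial>noise n) = 0" .
qed

lemma noise_second_moment:
  assumes "i \<in> {1..n}" "j \<in> {1..n}"
  shows "integrable (noise n) (\<lambda>x. x i * x j)"
    and "(\<integral>x. x i * x j \<partial>noise n) = (if i = j then 1 else 0)"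
proof -
  let ?N = "density lborel std_normal_density"
  interpret P: prob_space ?N by (rule prob_space_std_normal)
  define f where "f l = (\<lambda>y::real. (if l = i then y else 1) * (if l = j then y else 1))" for l
  have f_cases: "f l = (if l = i \<and> l = j then (\<lambda>y. y * y) else if l = i \<or> l = j then (\<lambda>y. y)
      else (\<lambda>y. 1))" for l
    by (auto simp: f_def fun_eq_iff)
  have fi: "integrable ?N (f l)" for l
    using std_normal_moments(1,3) by (simp add: f_cases)
  have prodeq: "(\<Prod>l\<in>{1..n}. f l (x l)) = x i * x j" for x
    using assms by (simp add: f_def prod.distrib prod.delta)
  have "integrable (noise n) (\<lambda>x. \<Prod>l\<in>{1..n}. f l (x l))"
    by (rule noise_integral_prod(1)) (rule fi)
  then show "integrable (noise n) (\<lambda>x. x i * x j)" by (simp only: prodeq)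
  have intf: "integral\<^sup>L ?N (f l) = (if l = i \<and> l = j then 1 else if l = i \<or> l = j then 0 else 1)"
    for l
    using std_normal_moments(2,4) P.prob_space by (simp add: f_cases)
  have "(\<Prod>l\<in>{1..n}. integral\<^sup>L ?N (f l)) = (if i = j then 1 else 0)"
  proof (cases "i = j")
    case True
    then show ?thesis by (simp add: intf prod.neutral)
  next
    case False
    then have "integral\<^sup>L ?N (f i) = 0" by (simp add: intf)
    then show ?thesis using False assms by (metis finite_atLeastAtMost prod_zero_iff)
  qed
  moreover have "(\<integral>x. (\<Prod>l\<in>{1..n}. f l (x l)) \<partial>noise n)
      = (\<Prod>l\<in>{1..n}. integral\<^sup>L ?N (f l))"
    by (rule noise_integral_prod(2)) (rule fi)
  ultimately show "(\<integral>x. x i * x j \<partial>noise n) = (if i = j then 1 else 0)"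
    by (simp only: prodeq)
qed

lemma noise_linear_form_square_moment:
  fixes c d :: real and w :: "nat \<Rightarrow> real"
  shows "integrable (noise n) (\<lambda>x. (c + d * (\<Sum>i\<in>{1..n}. w i * x i))\<^sup>2)"
    and "(\<integral>x. (c + d * (\<Sum>i\<in>{1..n}. w i * x i))\<^sup>2 \<partial>noise n) = c\<^sup>2 + d\<^sup>2 * (\<Sum>i\<in>{1..n}. (w i)\<^sup>2)"
proof -
  interpret P: prob_space "noise n" by (rule prob_space_noise)
  define lin where "lin x = (\<Sum>i\<in>{1..n}. (2 * c * d * w i) * x i)" for x :: "nat \<Rightarrow> real"
  define quad where "quad x = (\<Sum>i\<in>{1..n}. \<Sum>j\<in>{1..n}. (d\<^sup>2 * w i * w j) * (x i * x j))"
    for x :: "nat \<Rightarrow> real"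
  have eq: "(c + d * (\<Sum>i\<in>{1..n}. w i * x i))\<^sup>2 = c\<^sup>2 + lin x + quad x" for x
  proof -
    have "(d * (\<Sum>i\<in>{1..n}. w i * x i))\<^sup>2 = quad x"
      by (simp add: quad_def power2_eq_square sum_product sum_distrib_left mult_ac)
    moreover have "2 * c * (d * (\<Sum>i\<in>{1..n}. w i * x i)) = lin x"
      by (simp add: lin_def sum_distrib_left mult_ac)
    ultimately show ?thesis by (simp add: power2_sum)
  qed
  have i_lin: "integrable (noise n) lin"
    unfolding lin_def
    by (intro Bochner_Integration.integrable_sum integrable_mult_right noise_mean_zero(1)) auto
  have i_quad: "integrable (noise n) quad"
    unfolding quad_def
    by (intro Bochner_Integration.integrable_sum integrable_mult_right noise_second_moment(1)) auto
  show "integrable (noise n) (\<lambda>x. (c + d * (\<Sum>i\<in>{1..n}. w i * x i))\<^sup>2)"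
    unfolding eq by (intro Bochner_Integration.integrable_add i_lin i_quad) auto
  have "integral\<^sup>L (noise n) lin = 0"
    unfolding lin_def by (subst Bochner_Integration.integral_sum) (auto simp: noise_mean_zero)
  moreover have "integral\<^sup>L (noise n) quad = d\<^sup>2 * (\<Sum>i\<in>{1..n}. (w i)\<^sup>2)"
  proof -
    have int_ij: "integrable (noise n) (\<lambda>x. (d\<^sup>2 * w i * w j) * (x i * x j))"
      if "i \<in> {1..n}" "j \<in> {1..n}" for i j
      using noise_second_moment(1)[OF that] by simp
    have inner: "(\<integral>x. (\<Sum>j\<in>{1..n}. (d\<^sup>2 * w i * w j) * (x i * x j)) \<partial>noise n)
        = (\<Sum>j\<in>{1..n}. (d\<^sup>2 * w i * w j) * (if i = j then 1 else 0))" if i: "i \<in> {1..n}" for i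
    proof -
      have "(\<integral>x. (\<Sum>j\<in>{1..n}. (d\<^sup>2 * w i * w j) * (x i * x j)) \<partial>noise n)
          = (\<Sum>j\<in>{1..n}. \<integral>x. (d\<^sup>2 * w i * w j) * (x i * x j) \<partial>noise n)"
        by (rule Bochner_Integration.integral_sum) (rule int_ij[OF i])
      also have "\<dots> = (\<Sum>j\<in>{1..n}. (d\<^sup>2 * w i * w j) * (if i = j then 1 else 0))"
      proof (intro sum.cong refl)
        fix j assume "j \<in> {1..n}"
        then show "(\<integral>x. (d\<^sup>2 * w i * w j) * (x i * x j) \<partial>noise n)
            = (d\<^sup>2 * w i * w j) * (if i = j then 1 else 0)"
          using noise_second_moment(2)[OF i] by simp
      qed
      finally show ?thesis .
    qed
    have "integral\<^sup>L (noise n) quad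
        = (\<Sum>i\<in>{1..n}. \<integral>x. (\<Sum>j\<in>{1..n}. (d\<^sup>2 * w i * w j) * (x i * x j)) \<partial>noise n)"
      unfolding quad_def
      by (rule Bochner_Integration.integral_sum) (intro Bochner_Integration.integrable_sum int_ij)
    also have "\<dots> = (\<Sum>i\<in>{1..n}. \<Sum>j\<in>{1..n}. (d\<^sup>2 * w i * w j) * (if i = j then 1 else 0))"
      by (rule sum.cong[OF refl]) (rule inner)
    also have "\<dots> = d\<^sup>2 * (\<Sum>i\<in>{1..n}. (w i)\<^sup>2)"
      by (simp add: sum_distrib_left power2_eq_square if_distrib sum.delta mult.assoc cong: if_cong)
    finally show ?thesis .
  qed
  ultimately show "(\<integral>x. (c + d * (\<Sum>i\<in>{1..n}. w i * x i))\<^sup>2 \<partial>noise n)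
      = c\<^sup>2 + d\<^sup>2 * (\<Sum>i\<in>{1..n}. (w i)\<^sup>2)"
    unfolding eq using i_lin i_quad P.prob_space by simp
qed

section \<open>Bounding the expected posterior mass by the risk\<close>

lemma sum_atLeast1_lessThan_shift: "(\<Sum>k\<in>{1..<n}. h k) = (\<Sum>k<n-1. h (Suc k))"
proof (cases n)
  case (Suc n')
  have "(\<Sum>k\<in>{Suc 0..<Suc n'}. h k) = (\<Sum>k\<in>{0..<n'}. h (Suc k))"
    by (rule sum.shift_bounds_Suc_ivl)
  then show ?thesis using Suc by (simp add: atLeast0LessThan)
qed simp

lemma summable_tail_sum_term:
  fixes g :: "nat \<Rightarrow> real"
  assumes "summable (\<lambda>k. g (Suc k))" "\<And>k. 0 \<le> g (Suc k)"
  shows "summable (\<lambda>j. if n \<le> Suc j then g (Suc j) else 0)"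
  by (rule summable_comparison_test[OF _ assms(1)]) (auto intro!: exI[of _ 0] simp: assms(2))

lemma tail_sum_nonneg:
  fixes g :: "nat \<Rightarrow> real"
  assumes "summable (\<lambda>k. g (Suc k))" "\<And>k. 0 \<le> g (Suc k)"
  shows "0 \<le> tail_sum g n"
  unfolding tail_sum_def by (rule suminf_nonneg[OF summable_tail_sum_term[OF assms]]) (simp add: assms)

lemma H1_norm_extend_draw_diff:
  fixes f0 g :: "nat \<Rightarrow> real"
  assumes sf: "summable (\<lambda>k. (f0 (Suc k))\<^sup>2)"
  shows "H1_norm (\<lambda>k. extend_draw n g k - f0 k) =
     sqrt ((\<Sum>k\<in>{1..<n}. (g k - f0 k)\<^sup>2) + tail_sum (\<lambda>k. (f0 k)\<^sup>2) n)"
proof -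
  define A where "A k = (if Suc k < n then (g (Suc k) - f0 (Suc k))\<^sup>2 else 0)" for k
  define B where "B k = (if n \<le> Suc k then (f0 (Suc k))\<^sup>2 else 0)" for k
  have hk: "(extend_draw n g (Suc k) - f0 (Suc k))\<^sup>2 = A k + B k" for k
    by (auto simp: A_def B_def extend_draw_def)
  have sA: "summable A"
    by (rule summable_finite[of "{..<n}"]) (auto simp: A_def)
  have sB: "summable B"
    unfolding B_def by (rule summable_tail_sum_term[OF sf]) simp
  have "(\<Sum>k. A k) = (\<Sum>k<n-1. (g (Suc k) - f0 (Suc k))\<^sup>2)"
    by (subst suminf_finite[of "{..<n-1}"]) (auto simp: A_def intro!: sum.cong)
  also have "\<dots> = (\<Sum>k\<in>{1..<n}. (g k - f0 k)\<^sup>2)"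
    by (rule sum_atLeast1_lessThan_shift[symmetric])
  finally have "(\<Sum>k. (extend_draw n g (Suc k) - f0 (Suc k))\<^sup>2)
      = (\<Sum>k\<in>{1..<n}. (g k - f0 k)\<^sup>2) + tail_sum (\<lambda>k. (f0 k)\<^sup>2) n"
    unfolding hk suminf_add[OF sA sB, symmetric] by (simp add: tail_sum_def B_def[abs_def])
  then show ?thesis unfolding H1_norm_def by simp
qed

lemma PiM_normal_square_moment:
  fixes m sd :: "nat \<Rightarrow> real"
  assumes I: "finite I" "k \<in> I" and sd: "\<And>l. sd l > 0"
  shows "integrable (PiM I (\<lambda>l. density lborel (normal_density (m l) (sd l)))) (\<lambda>g. (g k - c)\<^sup>2)
      \<and> (\<integral>g. (g k - c)\<^sup>2 \<partial>PiM I (\<lambda>l. density lborel (normal_density (m l) (sd l))))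
          = (m k - c)\<^sup>2 + (sd k)\<^sup>2"
proof -
  define Mk where "Mk l = density lborel (normal_density (m l) (sd l))" for l
  interpret PS: product_sigma_finite Mk
    unfolding product_sigma_finite_def Mk_def
    using sd by (auto intro!: prob_space_imp_sigma_finite prob_space_normal_density)
  define f where "f l = (\<lambda>x::real. if l = k then (x - c)\<^sup>2 else 1)" for l
  have prodeq: "(\<Prod>l\<in>I. f l (g l)) = (g k - c)\<^sup>2" for g
    using I by (simp add: f_def prod.delta)
  have fi: "integrable (Mk l) (f l)"
    and fint: "integral\<^sup>L (Mk l) (f l) = (if l = k then (m k - c)\<^sup>2 + (sd k)\<^sup>2 else 1)" for l
  proof -
    interpret prob_space "Mk l" unfolding Mk_def by (rule prob_space_normal_density[OF sd])
    show "integrable (Mk l) (f l)"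
    proof (cases "l = k")
      case True
      then show ?thesis using normal_density_square_moment(1)[OF sd] by (simp add: f_def Mk_def)
    qed (simp add: f_def)
    show "integral\<^sup>L (Mk l) (f l) = (if l = k then (m k - c)\<^sup>2 + (sd k)\<^sup>2 else 1)"
    proof (cases "l = k")
      case True
      then show ?thesis using normal_density_square_moment(2)[OF sd] by (simp add: f_def Mk_def)
    qed (use prob_space in \<open>simp add: f_def\<close>)
  qed
  have "integrable (PiM I Mk) (\<lambda>g. \<Prod>l\<in>I. f l (g l))"
    by (rule PS.product_integrable_prod) (auto intro: fi I)
  moreover have "(\<integral>g. (\<Prod>l\<in>I. f l (g l)) \<partial>PiM I Mk) = (\<Prod>l\<in>I. integral\<^sup>L (Mk l) (f l))"
    by (rule PS.product_integral_prod) (auto intro: fi I)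
  moreover have "(\<Prod>l\<in>I. integral\<^sup>L (Mk l) (f l)) = (m k - c)\<^sup>2 + (sd k)\<^sup>2"
    using I by (simp add: fint prod.delta)
  ultimately show ?thesis unfolding Mk_def[abs_def] by (simp only: prodeq)
qed

lemma post_mass_le_posterior_risk:
  fixes f0 \<xi> :: "nat \<Rightarrow> real"
  assumes r: "r > 0" and vpos: "\<forall>k\<in>{1..<n}. post_var a lam n k > 0"
    and sf: "summable (\<lambda>k. (f0 (Suc k))\<^sup>2)"
  shows "post_mass a \<psi> lam n f0 \<xi> r \<le> posterior_risk a \<psi> lam n f0 \<xi> / r\<^sup>2"
proof -
  define m where "m k = post_mean a \<psi> lam n f0 \<xi> k" for k
  define sd where "sd k = (if k \<in> {1..<n} then sqrt (post_var a lam n k) else 1)" for k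
  define T where "T = tail_sum (\<lambda>k. (f0 k)\<^sup>2) n"
  define Mk where "Mk k = density lborel (normal_density (m k) (sd k))" for k
  have sdpos: "sd k > 0" for k using vpos by (auto simp: sd_def)
  have Tnn: "T \<ge> 0" unfolding T_def by (rule tail_sum_nonneg[OF sf]) simp
  have Peq: "posterior a \<psi> lam n f0 \<xi> = PiM {1..<n} Mk"
    unfolding posterior_def Mk_def by (rule PiM_cong) (auto simp: sd_def m_def)
  interpret Pr: prob_space "PiM {1..<n} Mk"
    by (rule prob_space_PiM) (auto simp: Mk_def intro!: prob_space_normal_density sdpos)
  define Q where "Q g = (\<Sum>k\<in>{1..<n}. (g k - f0 k)\<^sup>2)" for g :: "nat \<Rightarrow> real"
  have one: "integrable (PiM {1..<n} Mk) (\<lambda>g. (g k - f0 k)\<^sup>2) \<and>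
      (\<integral>g. (g k - f0 k)\<^sup>2 \<partial>PiM {1..<n} Mk) = (m k - f0 k)\<^sup>2 + post_var a lam n k"
    if k: "k \<in> {1..<n}" for k
    using PiM_normal_square_moment[where I="{1..<n}" and sd=sd and m=m and c="f0 k", OF _ k sdpos]
      k vpos
    by (simp add: Mk_def[abs_def] sd_def less_imp_le)
  have iQ0: "integrable (PiM {1..<n} Mk) Q"
    unfolding Q_def using one by (intro Bochner_Integration.integrable_sum) auto
  have iQ: "integrable (PiM {1..<n} Mk) (\<lambda>g. Q g + T)"
    using iQ0 by (intro Bochner_Integration.integrable_add Pr.integrable_const)
  have intQ: "(\<integral>g. Q g + T \<partial>PiM {1..<n} Mk) = posterior_risk a \<psi> lam n f0 \<xi>"
  proof -
    have "(\<integral>g. Q g \<partial>PiM {1..<n} Mk) = (\<Sum>k\<in>{1..<n}. (m k - f0 k)\<^sup>2 + post_var a lam n k)"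
      unfolding Q_def using one by (subst Bochner_Integration.integral_sum) auto
    moreover have "(\<integral>g. Q g + T \<partial>PiM {1..<n} Mk) = (\<integral>g. Q g \<partial>PiM {1..<n} Mk) + T"
      by (simp only: Bochner_Integration.integral_add[OF iQ0 Pr.integrable_const]
          lebesgue_integral_const Pr.prob_space scaleR_one)
    ultimately show ?thesis by (simp only: posterior_risk_def m_def T_def)
  qed
  have "H1_norm (\<lambda>k. extend_draw n g k - f0 k) = sqrt (Q g + T)" for g
    unfolding Q_def T_def by (rule H1_norm_extend_draw_diff[OF sf])
  moreover have "Q g + T \<ge> 0" for g using Tnn by (simp add: Q_def sum_nonneg)
  ultimately have seteq: "{g \<in> space (PiM {1..<n} Mk). H1_norm (\<lambda>k. extend_draw n g k - f0 k) \<ge> r}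
      = {g \<in> space (PiM {1..<n} Mk). Q g + T \<ge> r\<^sup>2}"
    using r by (auto simp: real_le_rsqrt real_sqrt_le_iff[of "r\<^sup>2", symmetric])
  have "post_mass a \<psi> lam n f0 \<xi> r
      = measure (PiM {1..<n} Mk) {g \<in> space (PiM {1..<n} Mk). Q g + T \<ge> r\<^sup>2}"
    unfolding post_mass_def Peq seteq ..
  also have "\<dots> \<le> (\<integral>g. Q g + T \<partial>PiM {1..<n} Mk) / r\<^sup>2"
    by (rule integral_Markov_inequality_measure[OF iQ, of "space (PiM {1..<n} Mk)"])
       (use r Tnn in \<open>auto simp: Q_def intro!: sum_nonneg AE_I2 add_nonneg_nonneg\<close>)
  finally show ?thesis unfolding intQ .
qed

lemma U_data_eq:
  "U_data a \<psi> n f0 \<xi> k = ip_d n (A_eval a \<psi> f0) (\<psi> k)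
     + (\<Sum>i\<in>{1..n}. (\<psi> k (design_pt n i) / real n) * \<xi> i)"
  unfolding U_data_def ip_d_def
  by (simp add: distrib_right sum.distrib distrib_left sum_distrib_left mult_ac)

lemma exp_post_mass_le_expected_risk:
  fixes f0 :: "nat \<Rightarrow> real"
  assumes r: "r > 0" and vpos: "\<forall>k\<in>{1..<n}. post_var a lam n k > 0"
    and sf: "summable (\<lambda>k. (f0 (Suc k))\<^sup>2)"
    and ipkk: "\<forall>k\<in>{1..<n}. ip_d n (\<psi> k) (\<psi> k) = 1"
  shows "exp_post_mass a \<psi> lam n f0 r \<le> expected_risk a \<psi> lam n f0 / r\<^sup>2"
proof -
  interpret NP: prob_space "noise n" by (rule prob_space_noise)
  define c where "c k = post_gain a lam n k" for k
  define D where "D k = ip_d n (A_eval a \<psi> f0) (\<psi> k)" for k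
  define w where "w k i = \<psi> k (design_pt n i) / real n" for k i
  define E where "E \<xi> k = (post_mean a \<psi> lam n f0 \<xi> k - f0 k)\<^sup>2" for \<xi> k
  have E_eq: "E \<xi> k = ((c k * D k - f0 k) + c k * (\<Sum>i\<in>{1..n}. w k i * \<xi> i))\<^sup>2" for \<xi> k
    unfolding E_def post_mean_def U_data_eq c_def D_def w_def post_gain_def
    by (simp add: algebra_simps)
  have ww: "(\<Sum>i\<in>{1..n}. (w k i)\<^sup>2) = 1 / real n" if "k \<in> {1..<n}" for k
  proof -
    have "(\<Sum>i\<in>{1..n}. (w k i)\<^sup>2) = (1 / real n) * ip_d n (\<psi> k) (\<psi> k)"
      unfolding w_def ip_d_def by (simp add: power2_eq_square sum_distrib_left sum_divide_distrib)
    then show ?thesis using ipkk that by simp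
  qed
  have iE: "integrable (noise n) (\<lambda>\<xi>. E \<xi> k)" for k
    unfolding E_eq by (rule noise_linear_form_square_moment(1))
  have intE: "(\<integral>\<xi>. E \<xi> k \<partial>noise n) = (c k * D k - f0 k)\<^sup>2 + (c k)\<^sup>2 / real n" if "k \<in> {1..<n}" for k
    unfolding E_eq noise_linear_form_square_moment(2) ww[OF that] by simp
  define T where "T = tail_sum (\<lambda>k. (f0 k)\<^sup>2) n"
  have Tnn: "T \<ge> 0" unfolding T_def by (rule tail_sum_nonneg[OF sf]) simp
  have risk_eq: "posterior_risk a \<psi> lam n f0 \<xi> = (\<Sum>k\<in>{1..<n}. E \<xi> k + post_var a lam n k) + T"
    for \<xi>
    by (simp add: posterior_risk_def E_def T_def)
  have i_sum: "integrable (noise n) (\<lambda>\<xi>. \<Sum>k\<in>{1..<n}. E \<xi> k + post_var a lam n k)"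
    by (intro Bochner_Integration.integrable_add Bochner_Integration.integrable_sum iE
        NP.integrable_const)
  have i_risk: "integrable (noise n) (\<lambda>\<xi>. posterior_risk a \<psi> lam n f0 \<xi>)"
    unfolding risk_eq by (intro Bochner_Integration.integrable_add i_sum NP.integrable_const)
  have "(\<integral>\<xi>. posterior_risk a \<psi> lam n f0 \<xi> \<partial>noise n)
      = (\<Sum>k\<in>{1..<n}. \<integral>\<xi>. E \<xi> k + post_var a lam n k \<partial>noise n) + T"
    unfolding risk_eq
    by (simp only: Bochner_Integration.integral_add[OF i_sum NP.integrable_const]
        lebesgue_integral_const NP.prob_space scaleR_one
        Bochner_Integration.integral_sum[OF Bochner_Integration.integrable_add[OF iE NP.integrable_const]])
  also have "\<dots> = expected_risk a \<psi> lam n f0"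
  proof -
    have "(\<integral>\<xi>. E \<xi> k + post_var a lam n k \<partial>noise n)
        = (c k * D k - f0 k)\<^sup>2 + (c k)\<^sup>2 / real n + post_var a lam n k" if "k \<in> {1..<n}" for k
      by (simp only: Bochner_Integration.integral_add[OF iE NP.integrable_const] intE[OF that]
          lebesgue_integral_const NP.prob_space scaleR_one)
    then show ?thesis
      unfolding expected_risk_def T_def c_def D_def by (intro arg_cong2[where f="(+)"] sum.cong) auto
  qed
  finally have int_risk: "(\<integral>\<xi>. posterior_risk a \<psi> lam n f0 \<xi> \<partial>noise n) = expected_risk a \<psi> lam n f0" .
  have "exp_post_mass a \<psi> lam n f0 r \<le> (\<integral>\<xi>. posterior_risk a \<psi> lam n f0 \<xi> / r\<^sup>2 \<partial>noise n)"
  proof (cases "integrable (noise n) (\<lambda>\<xi>. post_mass a \<psi> lam n f0 \<xi> r)")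
    case True
    then show ?thesis unfolding exp_post_mass_def
      by (rule integral_mono[OF _ integrable_divide[OF i_risk]])
        (rule post_mass_le_posterior_risk[OF r vpos sf])
  next
    case False
    have "0 \<le> posterior_risk a \<psi> lam n f0 \<xi>" for \<xi>
      unfolding risk_eq using Tnn vpos by (auto simp: E_def less_imp_le intro!: add_nonneg_nonneg sum_nonneg)
    then show ?thesis using False unfolding exp_post_mass_def
      by (simp add: not_integrable_integral_eq integral_nonneg)
  qed
  then show ?thesis by (simp add: int_risk)
qed

section \<open>The bias--variance bound\<close>

lemma Sb_norm_leD:
  fixes f :: "nat \<Rightarrow> real"
  assumes fS: "in_Sb \<beta> f" and fK: "Sb_norm \<beta> f \<le> K"
  shows "(\<Sum>k. (f (Suc k))\<^sup>2 * real (Suc k) powr (2 * \<beta>)) \<le> K\<^sup>2"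
    and "0 \<le> K"
proof -
  let ?S = "(\<Sum>k. (f (Suc k))\<^sup>2 * real (Suc k) powr (2 * \<beta>))"
  have S0: "?S \<ge> 0" by (rule suminf_nonneg[OF fS[unfolded in_Sb_def]]) simp
  have "Sb_norm \<beta> f = sqrt ?S" by (simp add: Sb_norm_def)
  then have "sqrt ?S \<le> K" using fK by simp
  moreover have "0 \<le> sqrt ?S" using S0 by simp
  ultimately show "0 \<le> K" by linarith
  show "?S \<le> K\<^sup>2" using \<open>sqrt ?S \<le> K\<close> S0 \<open>0 \<le> K\<close>
    by (metis real_sqrt_le_iff real_sqrt_pow2 power2_le_imp_le real_sqrt_ge_zero sqrt_le_D)
qed

lemma Sb_norm_le_coeff:
  fixes f :: "nat \<Rightarrow> real"
  assumes fS: "in_Sb \<beta> f" and fK: "Sb_norm \<beta> f \<le> K" and j: "j \<ge> 1"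
  shows "(f j)\<^sup>2 * real j powr (2 * \<beta>) \<le> K\<^sup>2"
proof -
  obtain j' where j': "j = Suc j'" using j by (cases j) auto
  have "(\<Sum>k\<in>{j'}. (f (Suc k))\<^sup>2 * real (Suc k) powr (2 * \<beta>)) \<le> (\<Sum>k. (f (Suc k))\<^sup>2 * real (Suc k) powr (2 * \<beta>))"
    using fS unfolding in_Sb_def by (intro sum_le_suminf) auto
  then show ?thesis using Sb_norm_leD[OF fS fK] j' by simp
qed

lemma Sb_norm_le_partial_sum:
  fixes f :: "nat \<Rightarrow> real"
  assumes fS: "in_Sb \<beta> f" and fK: "Sb_norm \<beta> f \<le> K"
  shows "(\<Sum>k\<in>{1..<n}. (f k)\<^sup>2 * real k powr (2 * \<beta>)) \<le> K\<^sup>2"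
proof -
  have "(\<Sum>k\<in>{1..<n}. (f k)\<^sup>2 * real k powr (2 * \<beta>)) = (\<Sum>k<n-1. (f (Suc k))\<^sup>2 * real (Suc k) powr (2 * \<beta>))"
    by (rule sum_atLeast1_lessThan_shift)
  also have "\<dots> \<le> (\<Sum>k. (f (Suc k))\<^sup>2 * real (Suc k) powr (2 * \<beta>))"
    using fS unfolding in_Sb_def by (intro sum_le_suminf) auto
  finally show ?thesis using Sb_norm_leD[OF fS fK] by linarith
qed

lemma Sb_norm_le_abs_coeff:
  fixes f :: "nat \<Rightarrow> real"
  assumes fS: "in_Sb \<beta> f" and fK: "Sb_norm \<beta> f \<le> K" and j: "j \<ge> n" "n \<ge> 1" and b: "\<beta> > 0"
  shows "\<bar>f j\<bar> \<le> K * real n powr (-\<beta>)"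
proof -
  have K0: "K \<ge> 0" using Sb_norm_leD[OF fS fK] by simp
  have jpos: "real j > 0" using j by simp
  have "(f j)\<^sup>2 * real j powr (2 * \<beta>) \<le> K\<^sup>2" using Sb_norm_le_coeff[OF fS fK] j by simp
  moreover have "real j powr (2 * \<beta>) = (real j powr \<beta>)\<^sup>2"
    by (simp add: power2_eq_square powr_add[symmetric])
  ultimately have "(\<bar>f j\<bar> * real j powr \<beta>)\<^sup>2 \<le> K\<^sup>2" by (simp add: power_mult_distrib)
  then have "\<bar>f j\<bar> * real j powr \<beta> \<le> K" using K0 by (rule power2_le_imp_le)
  moreover have "real n powr \<beta> \<le> real j powr \<beta>" using j b by (intro powr_mono2) auto
  ultimately have "\<bar>f j\<bar> * real n powr \<beta> \<le> K"
    by (meson abs_ge_zero mult_left_mono order_trans)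
  moreover have "real n powr \<beta> > 0" using j by simp
  ultimately show ?thesis by (simp add: powr_minus field_simps)
qed

lemma Sb_norm_le_tail_sum:
  fixes f :: "nat \<Rightarrow> real"
  assumes fS: "in_Sb \<beta> f" and fK: "Sb_norm \<beta> f \<le> K" and n: "n \<ge> 1" and b: "\<beta> > 0"
  shows "tail_sum (\<lambda>k. (f k)\<^sup>2) n \<le> K\<^sup>2 * real n powr (-2 * \<beta>)"
proof -
  let ?g = "\<lambda>k. real n powr (-2 * \<beta>) * ((f (Suc k))\<^sup>2 * real (Suc k) powr (2 * \<beta>))"
  have sg: "summable ?g" using fS unfolding in_Sb_def by (rule summable_mult)
  have le: "(if n \<le> Suc k then (f (Suc k))\<^sup>2 else 0) \<le> ?g k" for k
  proof (cases "n \<le> Suc k")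
    case True
    have "1 \<le> real n powr (-2 * \<beta>) * real (Suc k) powr (2 * \<beta>)"
    proof -
      have "real n powr (2 * \<beta>) \<le> real (Suc k) powr (2 * \<beta>)" using True n b by (intro powr_mono2) auto
      moreover have "real n powr (-2 * \<beta>) * real n powr (2 * \<beta>) = 1" using n by (simp add: powr_add[symmetric])
      moreover have "real n powr (-2 * \<beta>) \<ge> 0" by simp
      ultimately show ?thesis by (metis mult_left_mono)
    qed
    then have "(f (Suc k))\<^sup>2 * 1 \<le> (f (Suc k))\<^sup>2 * (real n powr (-2 * \<beta>) * real (Suc k) powr (2 * \<beta>))"
      by (intro mult_left_mono) auto
    then show ?thesis using True by (simp add: mult_ac)
  qed simp
  have s1: "summable (\<lambda>k. if n \<le> Suc k then (f (Suc k))\<^sup>2 else 0)"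
    by (rule summable_comparison_test[OF _ sg]) (use le in \<open>auto intro!: exI[of _ 0]\<close>)
  have "(\<Sum>k. if n \<le> Suc k then (f (Suc k))\<^sup>2 else 0) \<le> (\<Sum>k. ?g k)"
    by (rule suminf_le[OF le s1 sg])
  also have "\<dots> = real n powr (-2 * \<beta>) * (\<Sum>k. (f (Suc k))\<^sup>2 * real (Suc k) powr (2 * \<beta>))"
    using fS unfolding in_Sb_def by (rule suminf_mult)
  also have "\<dots> \<le> real n powr (-2 * \<beta>) * K\<^sup>2"
    using Sb_norm_leD[OF fS fK] by (intro mult_left_mono) auto
  finally show ?thesis by (simp add: mult_ac tail_sum_def)
qed

lemma in_Sb_imp_summable_square:
  assumes "in_Sb \<beta> f" "\<beta> > 0"
  shows "summable (\<lambda>k. (f (Suc k))\<^sup>2)"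
proof (rule summable_comparison_test[OF _ assms(1)[unfolded in_Sb_def]])
  show "\<exists>N. \<forall>n\<ge>N. norm ((f (Suc n))\<^sup>2) \<le> (f (Suc n))\<^sup>2 * real (Suc n) powr (2 * \<beta>)"
  proof (intro exI allI impI)
    fix n :: nat
    have "1 \<le> real (Suc n) powr (2 * \<beta>)" using assms(2) by (intro ge_one_powr_ge_zero) auto
    then have "(f (Suc n))\<^sup>2 * 1 \<le> (f (Suc n))\<^sup>2 * real (Suc n) powr (2 * \<beta>)" by (intro mult_left_mono) auto
    then show "norm ((f (Suc n))\<^sup>2) \<le> (f (Suc n))\<^sup>2 * real (Suc n) powr (2 * \<beta>)" by simp
  qed
qed

lemma design_cond_orthonormal:
  assumes "design_cond \<psi>" "n \<ge> 2" "j \<in> {1..<n}" "k \<in> {1..<n}"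
  shows "ip_d n (\<psi> j) (\<psi> k) = (if j = k then 1 else 0)"
  using assms unfolding design_cond_def by auto

lemma design_cond_aliasing_bound:
  assumes "design_cond \<psi>"
  shows "\<exists>Md>0. \<forall>n\<ge>2. \<forall>k j. 1 \<le> k \<and> k < n \<and> n \<le> j \<longrightarrow> \<bar>ip_d n (\<psi> j) (\<psi> k)\<bar> \<le> Md"
proof -
  from assms obtain M where M: "M > 0" and H: "\<forall>n\<ge>2. \<forall>k. 1 \<le> k \<and> k < n \<longrightarrow>
        (\<exists>kb :: bool \<Rightarrow> nat. \<forall>l\<ge>1. kb (even l) < n \<and>
           0 < \<bar>ip_d n (\<psi> (l * n + kb (even l))) (\<psi> k)\<bar> \<and>
           \<bar>ip_d n (\<psi> (l * n + kb (even l))) (\<psi> k)\<bar> < M \<and>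
           (\<forall>j. l * n \<le> j \<and> j < (l + 1) * n \<and> j \<noteq> l * n + kb (even l) \<longrightarrow>
              ip_d n (\<psi> j) (\<psi> k) = 0))"
    unfolding design_cond_def by blast
  have "\<bar>ip_d n (\<psi> j) (\<psi> k)\<bar> \<le> M" if n: "n \<ge> 2" and k: "1 \<le> k" "k < n" and j: "n \<le> j" for n k j
  proof -
    obtain kb :: "bool \<Rightarrow> nat" where kb: "\<forall>l\<ge>1. kb (even l) < n \<and>
           0 < \<bar>ip_d n (\<psi> (l * n + kb (even l))) (\<psi> k)\<bar> \<and>
           \<bar>ip_d n (\<psi> (l * n + kb (even l))) (\<psi> k)\<bar> < M \<and>
           (\<forall>j. l * n \<le> j \<and> j < (l + 1) * n \<and> j \<noteq> l * n + kb (even l) \<longrightarrow>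
              ip_d n (\<psi> j) (\<psi> k) = 0)"
      using H n k by blast
    define l where "l = j div n"
    have "0 < l" using j n by (simp add: l_def div_greater_zero_iff)
    then have l1: "l \<ge> 1" by simp
    have lo: "l * n \<le> j" by (simp add: l_def)
    have jeq: "j = l * n + j mod n" by (simp add: l_def)
    have "j mod n < n" using n by simp
    then have hi: "j < (l + 1) * n" using jeq by (metis add_less_cancel_left distrib_right mult_1)
    show ?thesis
    proof (cases "j = l * n + kb (even l)")
      case True then show ?thesis using kb l1 by fastforce
    next
      case False then show ?thesis using kb l1 lo hi M by force
    qed
  qed
  then show ?thesis using M by blast
qed

lemma powr_diff_ge_diff:
  fixes k m s :: real
  assumes "1 \<le> k" "k \<le> m" "1 \<le> s"
  shows "m - k \<le> m powr s - k powr s"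
proof -
  define t where "t = m / k"
  have t1: "t \<ge> 1" using assms by (simp add: t_def)
  have mt: "m = k * t" using assms by (simp add: t_def)
  have ts: "t powr s \<ge> t" using powr_mono[OF assms(3) t1] t1 by simp
  have ks: "k powr s \<ge> k" using powr_mono[OF assms(3) assms(1)] assms by simp
  have "m powr s = k powr s * t powr s" using assms t1 by (simp add: mt powr_mult)
  then have "m powr s - k powr s = k powr s * (t powr s - 1)" by (simp add: algebra_simps)
  also have "\<dots> \<ge> k powr s * (t - 1)" using ts by (intro mult_left_mono) auto
  also have "k powr s * (t - 1) \<ge> k * (t - 1)" using ks t1 by (intro mult_right_mono) auto
  finally show ?thesis using mt by (simp add: algebra_simps)
qed

lemma bigtheta_imp_uniform_bounds:
  fixes a g :: "nat \<Rightarrow> real"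
  assumes a_pos: "\<forall>k\<ge>1. a k > 0" and gpos: "\<And>k. g k > 0" and a_rate: "a \<in> \<Theta>(g)"
  shows "\<exists>Cl Cu. Cl > 0 \<and> Cu > 0 \<and> (\<forall>k\<ge>1. Cl * g k \<le> a k \<and> a k \<le> Cu * g k)"
proof -
  from bigthetaD1[OF a_rate] obtain c1 where c1: "c1 > 0" "eventually (\<lambda>k. norm (a k) \<le> c1 * norm (g k)) at_top"
    by (elim landau_o.bigE)
  from bigthetaD2[OF a_rate, unfolded bigomega_iff_bigo] obtain c2 where c2: "c2 > 0" "eventually (\<lambda>k. norm (g k) \<le> c2 * norm (a k)) at_top"
    by (elim landau_o.bigE)
  obtain N where N: "\<forall>k\<ge>N. norm (a k) \<le> c1 * norm (g k) \<and> norm (g k) \<le> c2 * norm (a k)"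
    using eventually_conj[OF c1(2) c2(2)] unfolding eventually_at_top_linorder by blast
  define S where "S = {1..max N 1}"
  have Sfin: "finite S" and Sne: "S \<noteq> {}" by (auto simp: S_def)
  define Cu where "Cu = max c1 (Max ((\<lambda>k. a k / g k) ` S))"
  define Cl where "Cl = min (1 / c2) (Min ((\<lambda>k. a k / g k) ` S))"
  have Sp: "a k / g k > 0" if "k \<in> S" for k using that a_pos gpos by (auto simp: S_def)
  have Cupos: "Cu > 0" using c1 by (simp add: Cu_def)
  have Clpos: "Cl > 0" using c2 Sp Sfin Sne by (auto simp: Cl_def)
  have "Cl * g k \<le> a k \<and> a k \<le> Cu * g k" if k: "k \<ge> 1" for k
  proof (cases "k \<ge> N")
    case True
    have ak: "a k > 0" using a_pos k by auto
    from N True have "a k \<le> c1 * g k" "g k \<le> c2 * a k" using ak gpos[of k] by auto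
    moreover have "Cl \<le> 1 / c2" "c1 \<le> Cu" by (auto simp: Cl_def Cu_def)
    ultimately show ?thesis using c2 gpos[of k] c1 ak
      by (auto simp: field_simps intro: order.trans[OF mult_right_mono[of Cl "1/c2" "g k"]]
                intro!: order.trans[OF _ mult_right_mono[of c1 Cu "g k"]])
  next
    case False
    then have kS: "k \<in> S" using k by (auto simp: S_def)
    have "Cl \<le> a k / g k" unfolding Cl_def using Sfin kS by (auto intro!: min.coboundedI2)
    moreover have "a k / g k \<le> Cu" unfolding Cu_def using Sfin kS by (auto intro!: max.coboundedI2)
    ultimately show ?thesis using gpos[of k] by (simp add: field_simps)
  qed
  then show ?thesis using Clpos Cupos by blast
qed

lemma sum_power_diff_le:
  fixes r :: real assumes r: "0 \<le> r" "r < 1"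
  shows "(\<Sum>k\<in>{1..<n}. r ^ (n - k)) \<le> 1 / (1 - r)"
proof -
  have "(\<Sum>k\<in>{1..<n}. r ^ (n - k)) = (\<Sum>m\<in>{1..<n}. r ^ m)"
    by (rule sum.reindex_bij_witness[of _ "\<lambda>m. n - m" "\<lambda>k. n - k"]) auto
  also have "\<dots> \<le> (\<Sum>m<n. r ^ m)" using r by (intro sum_mono2) auto
  also have "\<dots> = (1 - r ^ n) / (1 - r)" using r by (simp add: sum_gp_strict)
  also have "\<dots> \<le> 1 / (1 - r)" using r by (intro divide_right_mono) auto
  finally show ?thesis .
qed

lemma exp_powr_le_geometric:
  fixes p s :: real and m n :: nat
  assumes p: "p > 0" and s: "s \<ge> 1" and n: "1 \<le> n" and nm: "n \<le> m"
  shows "exp (- p * real m powr s) \<le> exp (- p * real n powr s) * exp (- p) ^ (m - n)"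
proof -
  have "real m - real n \<le> real m powr s - real n powr s" using powr_diff_ge_diff[of "real n" "real m" s] n nm s by simp
  then have "p * (real m - real n) \<le> p * (real m powr s - real n powr s)"
    using p by (intro mult_left_mono) auto
  then have "- p * real m powr s \<le> - p * real n powr s + real (m - n) * (- p)"
    using nm by (simp add: of_nat_diff algebra_simps)
  then have "exp (- p * real m powr s) \<le> exp (- p * real n powr s + real (m - n) * (- p))" by simp
  also have "\<dots> = exp (- p * real n powr s) * exp (- p) ^ (m - n)"
    by (simp only: exp_add exp_of_nat_mult)
  finally show ?thesis .
qed

lemma inverse_exp_minus_square: "1 / exp (- x) ^ 2 = exp (2 * (x::real))"
proof -
  have "exp (- x) ^ 2 = exp (- (2 * x))"
    using exp_of_nat_mult[of 2 "- x"] by simp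
  then show ?thesis by (simp add: exp_minus field_simps)
qed

lemma ip_d_A_eval_aliasing_bound:
  fixes a :: "nat \<Rightarrow> real" and \<psi> :: "nat \<Rightarrow> real \<Rightarrow> real" and f :: "nat \<Rightarrow> real"
  assumes n2: "n \<ge> 2" and k: "1 \<le> k" "k < n"
    and apos: "\<forall>j\<ge>1. a j > 0"
    and asum: "summable (\<lambda>j. a (Suc j))"
    and Af: "\<forall>x\<in>{0..1}. summable (\<lambda>j. f (Suc j) * a (Suc j) * \<psi> (Suc j) x)"
    and orth: "\<forall>j. 1 \<le> j \<and> j < n \<longrightarrow> ip_d n (\<psi> j) (\<psi> k) = (if j = k then 1 else 0)"
    and Mdb: "\<forall>j. n \<le> j \<longrightarrow> \<bar>ip_d n (\<psi> j) (\<psi> k)\<bar> \<le> Md"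
    and fb: "\<forall>j. n \<le> j \<longrightarrow> \<bar>f j\<bar> \<le> Kf"
  shows "\<bar>ip_d n (A_eval a \<psi> f) (\<psi> k) - a k * f k\<bar> \<le> Md * Kf * tail_sum a n"
proof -
  define t where "t i j = f (Suc j) * a (Suc j) * \<psi> (Suc j) (design_pt n i)" for i j
  define e where "e j = f (Suc j) * a (Suc j) * ip_d n (\<psi> (Suc j)) (\<psi> k)" for j
  define Dk where "Dk = (1 / real n) * (\<Sum>i=1..n. A_eval a \<psi> f (design_pt n i) * \<psi> k (design_pt n i))"
  have xin: "design_pt n i \<in> {0..1}" if "i \<in> {1..n}" for i
    using that n2 by (auto simp: design_pt_def)
  have ts: "(\<lambda>j. t i j) sums A_eval a \<psi> f (design_pt n i)" if "i \<in> {1..n}" for i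
    unfolding t_def A_eval_def using Af xin[OF that] by (intro summable_sums) auto
  have "(\<lambda>j. \<Sum>i\<in>{1..n}. t i j * \<psi> k (design_pt n i)) sums (\<Sum>i\<in>{1..n}. A_eval a \<psi> f (design_pt n i) * \<psi> k (design_pt n i))"
    by (rule sums_sum) (rule sums_mult2[OF ts])
  then have "(\<lambda>j. (1 / real n) * (\<Sum>i\<in>{1..n}. t i j * \<psi> k (design_pt n i))) sums Dk"
    unfolding Dk_def by (rule sums_mult)
  moreover have "(1 / real n) * (\<Sum>i\<in>{1..n}. t i j * \<psi> k (design_pt n i)) = e j" for j
    unfolding t_def e_def ip_d_def by (simp add: sum_distrib_left mult_ac)
  ultimately have es: "e sums Dk" by simp
  define e1 where "e1 j = (if j = k - 1 then f (Suc j) * a (Suc j) else 0)" for j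
  define e2 where "e2 j = (if n \<le> Suc j then e j else 0)" for j
  have esplit: "e j = e1 j + e2 j" for j
  proof (cases "n \<le> Suc j")
    case True
    then have "j \<noteq> k - 1" using k by auto
    then show ?thesis using True by (simp add: e1_def e2_def)
  next
    case False
    then have ipj: "ip_d n (\<psi> (Suc j)) (\<psi> k) = (if Suc j = k then 1 else 0)" using orth by auto
    have "(Suc j = k) = (j = k - 1)" using k by auto
    then show ?thesis using False ipj by (simp add: e_def e1_def e2_def)
  qed
  have e1s: "e1 sums (f k * a k)"
  proof -
    have "e1 sums (f (Suc (k - 1)) * a (Suc (k - 1)))"
      unfolding e1_def by (rule sums_single)
    then show ?thesis using k by simp
  qed
  have e2s: "e2 sums (Dk - f k * a k)"
  proof -
    have "(\<lambda>j. e j - e1 j) sums (Dk - f k * a k)" by (rule sums_diff[OF es e1s])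
    then show ?thesis by (simp add: esplit)
  qed
  define g where "g j = Md * Kf * (if n \<le> Suc j then a (Suc j) else 0)" for j
  have Atsum: "summable (\<lambda>j. if n \<le> Suc j then a (Suc j) else 0)"
    by (rule summable_comparison_test[OF _ asum]) (auto intro!: exI[of _ 0] simp: apos less_imp_le)
  have gs: "g sums (Md * Kf * (\<Sum>j. if n \<le> Suc j then a (Suc j) else 0))"
    unfolding g_def by (rule sums_mult[OF summable_sums[OF Atsum]])
  have bnd: "\<bar>e2 j\<bar> \<le> g j" for j
  proof (cases "n \<le> Suc j")
    case True
    have aj: "a (Suc j) > 0" using apos by auto
    have "\<bar>e2 j\<bar> = \<bar>f (Suc j)\<bar> * a (Suc j) * \<bar>ip_d n (\<psi> (Suc j)) (\<psi> k)\<bar>"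
      using True aj by (simp add: e2_def e_def abs_mult)
    also have "\<dots> \<le> Kf * a (Suc j) * Md"
      using fb Mdb True aj by (intro mult_mono) auto
    finally show ?thesis using True by (simp add: g_def mult_ac)
  next
    case False
    have "0 \<le> \<bar>e2 0\<bar>" by simp
    then show ?thesis using False by (simp add: e2_def g_def)
  qed
  have up: "Dk - f k * a k \<le> Md * Kf * (\<Sum>j. if n \<le> Suc j then a (Suc j) else 0)"
    by (rule sums_le[OF _ e2s gs]) (use bnd in \<open>auto simp: abs_le_iff\<close>)
  have lo: "- (Md * Kf * (\<Sum>j. if n \<le> Suc j then a (Suc j) else 0)) \<le> Dk - f k * a k"
  proof -
    have lt: "- g j \<le> e2 j" for j using bnd[of j] abs_le_iff[of "e2 j" "g j"] by linarith
    show ?thesis by (rule sums_le[OF _ sums_minus[OF gs] e2s]) (use lt in auto)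
  qed
  show ?thesis using up lo unfolding Dk_def ip_d_def tail_sum_def by (simp add: abs_le_iff mult.commute)
qed

lemma posterior_coordinate_risk_le:
  fixes a lam nn f R kp B1 :: real
  assumes a: "a > 0" and l: "lam > 0" and nn: "nn > 0" and kp: "kp > 0"
    and B: "1 / (kp * (1 + nn * a\<^sup>2 * lam)) \<le> B1"
  shows "(nn * a * lam / (nn * a\<^sup>2 * lam + 1) * (a * f + R) - f)\<^sup>2
          + (nn * a * lam / (nn * a\<^sup>2 * lam + 1))\<^sup>2 / nn + lam / (nn * a\<^sup>2 * lam + 1)
        \<le> 2 * ((f\<^sup>2 * kp) * B1) + 2 * (R\<^sup>2 / a\<^sup>2) + 2 * (lam / (nn * a\<^sup>2 * lam + 1))"
proof -
  define x where "x = nn * a\<^sup>2 * lam"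
  have x0: "x > 0" using a l nn by (simp add: x_def)
  define c where "c = nn * a * lam / (x + 1)"
  have ca: "c * a = x / (x + 1)" using x0 by (simp add: c_def x_def power2_eq_square field_simps)
  have c0: "c \<ge> 0" using a l nn x0 by (simp add: c_def)
  have ca1: "c * a - 1 = - 1 / (x + 1)" using ca x0 by (simp add: field_simps)
  have "c * (a * f + R) - f = (c * a - 1) * f + c * R" by (simp add: algebra_simps)
  then have e1: "c * (a * f + R) - f = - f / (x + 1) + c * R" using ca1 by simp
  have sq: "(u + w)\<^sup>2 \<le> 2 * u\<^sup>2 + 2 * w\<^sup>2" for u w :: real
    using sum_squares_ge_zero[of "u - w" 0] by (simp add: power2_eq_square algebra_simps)
  have u: "(- f / (x + 1))\<^sup>2 \<le> (f\<^sup>2 * kp) * B1"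
  proof -
    have "(- f / (x + 1))\<^sup>2 = f\<^sup>2 / (x + 1)\<^sup>2" by (simp add: power_divide)
    also have "\<dots> \<le> f\<^sup>2 / (x + 1)"
      using x0 by (intro divide_left_mono) (auto simp: power2_eq_square)
    also have "\<dots> = (f\<^sup>2 * kp) * (1 / (kp * (1 + x)))" using kp x0 by (simp add: add.commute)
    also have "\<dots> \<le> (f\<^sup>2 * kp) * B1" using B kp by (intro mult_left_mono) (auto simp: x_def)
    finally show ?thesis .
  qed
  have w: "(c * R)\<^sup>2 \<le> R\<^sup>2 / a\<^sup>2"
  proof -
    have "c * a \<le> 1" using ca x0 by simp
    then have "c \<le> 1 / a" using a by (simp add: field_simps)
    then have "c\<^sup>2 \<le> (1 / a)\<^sup>2" using c0 by (intro power_mono) auto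
    then have "c\<^sup>2 * R\<^sup>2 \<le> (1 / a)\<^sup>2 * R\<^sup>2" by (intro mult_right_mono) auto
    then show ?thesis by (simp add: power_mult_distrib power_divide)
  qed
  have v: "c\<^sup>2 / nn \<le> lam / (x + 1)"
  proof -
    have h: "(nn * a * lam)\<^sup>2 / nn = lam * x" using nn by (simp add: x_def power2_eq_square field_simps)
    have "c\<^sup>2 / nn = (nn * a * lam)\<^sup>2 / nn / (x + 1)\<^sup>2"
      by (simp add: c_def power_divide)
    then have "c\<^sup>2 / nn = lam * x / (x + 1)\<^sup>2" using h by simp
    also have "\<dots> \<le> lam * (x + 1) / (x + 1)\<^sup>2" using x0 l
      by (intro divide_right_mono mult_left_mono) auto
    also have "\<dots> = lam / (x + 1)" using x0 by (simp add: power2_eq_square)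
    finally show ?thesis .
  qed
  have "(c * (a * f + R) - f)\<^sup>2 \<le> 2 * (f\<^sup>2 * kp * B1) + 2 * (R\<^sup>2 / a\<^sup>2)"
    using sq[of "- f / (x + 1)" "c * R"] u w unfolding e1 by linarith
  then show ?thesis using v unfolding c_def x_def by linarith
qed

locale exp_lower_bound =
  fixes a :: "nat \<Rightarrow> real" and p s Cl :: real
  assumes p: "p > 0" and s: "s \<ge> 1" and Cl: "Cl > 0"
    and alow: "\<forall>k\<ge>1. Cl * exp (- p * real k powr s) \<le> a k"
begin

lemma pos: "k \<ge> 1 \<Longrightarrow> a k > 0"
  using alow Cl by (smt (verit) exp_gt_zero mult_pos_pos)

lemma inverse_n_square_le:
  assumes k: "k \<ge> 1" "real k \<le> t" and n: "n \<ge> 1"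
  shows "1 / (real n * (a k)\<^sup>2) \<le> exp (2 * p * t powr s) / (Cl\<^sup>2 * real n)"
proof -
  have low: "Cl * exp (- p * real k powr s) > 0" using Cl by simp
  have "1 / (a k)\<^sup>2 \<le> 1 / (Cl * exp (- p * real k powr s))\<^sup>2"
    using alow k low by (intro divide_left_mono power_mono mult_pos_pos) auto
  also have "\<dots> = exp (2 * p * real k powr s) / Cl\<^sup>2"
    by (simp add: power_mult_distrib exp_minus power2_eq_square field_simps flip: exp_add)
  also have "\<dots> \<le> exp (2 * p * t powr s) / Cl\<^sup>2"
    using k p s by (intro divide_right_mono) (auto intro!: mult_left_mono powr_mono2)
  finally have "1 / (a k)\<^sup>2 / real n \<le> exp (2 * p * t powr s) / Cl\<^sup>2 / real n"
    using n by (intro divide_right_mono) auto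
  then show ?thesis by (simp add: mult.commute)
qed

end

locale exp_decay = exp_lower_bound +
  fixes Cu :: real
  assumes Cu: "Cu > 0" and aup: "\<forall>k\<ge>1. a k \<le> Cu * exp (- p * real k powr s)"
begin

lemma ab: "\<forall>k\<ge>1. Cl * exp (- p * real k powr s) \<le> a k \<and> a k \<le> Cu * exp (- p * real k powr s)"
  using alow aup by blast

lemma summable_shift: "summable (\<lambda>j. a (Suc j))"
proof -
  have q: "exp (- p) < 1" "0 \<le> exp (-p)" using p by auto
  have le: "norm (a (Suc j)) \<le> Cu * exp (- p) ^ j" for j
  proof -
    have "exp (- p * real (Suc j) powr s) \<le> exp (- p * real 1 powr s) * exp (- p) ^ (Suc j - 1)"
      by (rule exp_powr_le_geometric[OF p s]) auto
    also have "\<dots> \<le> 1 * exp (- p) ^ j" using p by simp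
    finally have "exp (- p * real (Suc j) powr s) \<le> exp (- p) ^ j" by simp
    then have "Cu * exp (- p * real (Suc j) powr s) \<le> Cu * exp (- p) ^ j" using Cu by (intro mult_left_mono) auto
    moreover have "a (Suc j) \<le> Cu * exp (- p * real (Suc j) powr s)" using ab by auto
    ultimately have "a (Suc j) \<le> Cu * exp (- p) ^ j" by linarith
    then show ?thesis using pos[of "Suc j"] by simp
  qed
  show ?thesis
    by (rule summable_comparison_test[OF _ summable_mult[OF summable_geometric]])
       (use le q in \<open>auto intro!: exI[of _ 0]\<close>)
qed


lemma tail_sum_a_nonneg: "tail_sum a n \<ge> 0"
  by (rule tail_sum_nonneg[OF summable_shift]) (use pos in \<open>auto intro: less_imp_le\<close>)

lemma tail_sum_le:
  assumes n: "n \<ge> 1"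
  shows "tail_sum a n \<le> Cu * exp (- p * real n powr s) / (1 - exp (- p))"
proof -
  define q where "q = exp (- p)"
  have q: "0 \<le> q" "q < 1" using p by (auto simp: q_def)
  define g where "g j = (if n \<le> Suc j then Cu * exp (- p * real n powr s) * q ^ (Suc j - n) else 0)" for j
  have le: "(if n \<le> Suc j then a (Suc j) else 0) \<le> g j" for j
  proof (cases "n \<le> Suc j")
    case True
    have "a (Suc j) \<le> Cu * exp (- p * real (Suc j) powr s)" using ab by auto
    also have "\<dots> \<le> Cu * (exp (- p * real n powr s) * q ^ (Suc j - n))"
      unfolding q_def by (intro mult_left_mono exp_powr_le_geometric[OF p s n True]) (use Cu in auto)
    finally show ?thesis using True by (simp add: g_def mult.assoc)
  qed (simp add: g_def)
  have "(\<lambda>i. g (i + (n - 1))) sums (Cu * exp (- p * real n powr s) * (1 / (1 - q)))"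
  proof -
    have "g (i + (n - 1)) = Cu * exp (- p * real n powr s) * q ^ i" for i
      using n by (simp add: g_def Suc_diff_le)
    moreover have "(\<lambda>i. Cu * exp (- p * real n powr s) * q ^ i) sums (Cu * exp (- p * real n powr s) * (1 / (1 - q)))"
      by (rule sums_mult[OF geometric_sums]) (use q in simp)
    ultimately show ?thesis by simp
  qed
  then have "g sums (Cu * exp (- p * real n powr s) * (1 / (1 - q)) + (\<Sum>i<n - 1. g i))"
    by (simp add: sums_iff_shift)
  moreover have "(\<Sum>i<n - 1. g i) = 0" by (auto simp: g_def intro!: sum.neutral)
  ultimately have gs: "g sums (Cu * exp (- p * real n powr s) / (1 - q))" by simp
  have "tail_sum a n \<le> Cu * exp (- p * real n powr s) / (1 - q)"
    unfolding tail_sum_def by (rule sums_le[OF le summable_sums[OF summable_tail_sum_term[OF summable_shift]] gs])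
    (use pos in \<open>auto intro: less_imp_le\<close>)
  then show ?thesis by (simp add: q_def)
qed

lemma sum_inverse_square_le:
  assumes n: "n \<ge> 1"
  shows "(\<Sum>k\<in>{1..<n}. 1 / (a k)\<^sup>2) \<le> exp (2 * p * real n powr s) / (Cl\<^sup>2 * (1 - (exp (- p))\<^sup>2))"
proof -
  define q where "q = exp (- p)"
  have q0: "0 \<le> q" "q < 1" using p by (auto simp: q_def)
  have q: "0 \<le> q\<^sup>2" "q\<^sup>2 < 1" using q0 power_less_one_iff[of q 2] by auto
  have "1 / (a k)\<^sup>2 \<le> exp (2 * p * real n powr s) / Cl\<^sup>2 * (q\<^sup>2) ^ (n - k)" if k: "k \<in> {1..<n}" for k
  proof -
    have ak: "a k \<ge> Cl * exp (- p * real k powr s)" using ab k by auto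
    have pos: "Cl * exp (- p * real k powr s) > 0" using Cl by simp
    have "1 / (a k)\<^sup>2 \<le> 1 / (Cl * exp (- p * real k powr s))\<^sup>2"
      using ak pos by (intro divide_left_mono power_mono mult_pos_pos) auto
    also have "\<dots> = (1 / exp (- p * real k powr s) ^ 2) / Cl\<^sup>2"
      by (simp add: power_mult_distrib divide_divide_eq_left mult.commute)
    also have "1 / exp (- p * real k powr s) ^ 2 = exp (2 * p * real k powr s)"
      using inverse_exp_minus_square[of "p * real k powr s"] by simp
    also have "exp (2 * p * real k powr s) \<le> exp (2 * p * real n powr s) * (q\<^sup>2) ^ (n - k)"
    proof -
      have "real n - real k \<le> real n powr s - real k powr s" using powr_diff_ge_diff[of "real k" "real n" s] k s by simp
      then have "(2 * p) * (real n - real k) \<le> (2 * p) * (real n powr s - real k powr s)"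
        using p by (intro mult_left_mono) auto
      then have "2 * p * real k powr s \<le> 2 * p * real n powr s + real (n - k) * (- 2 * p)"
        using k by (simp add: of_nat_diff algebra_simps)
      then have "exp (2 * p * real k powr s) \<le> exp (2 * p * real n powr s + real (n - k) * (- 2 * p))" by simp
      also have "\<dots> = exp (2 * p * real n powr s) * exp (- 2 * p) ^ (n - k)"
        by (simp only: exp_add exp_of_nat_mult)
      also have "exp (- 2 * p) = q\<^sup>2"
        using exp_of_nat_mult[of 2 "- p"] by (simp add: q_def)
      finally show ?thesis .
    qed
    then have "exp (2 * p * real k powr s) / Cl\<^sup>2 \<le> exp (2 * p * real n powr s) * (q\<^sup>2) ^ (n - k) / Cl\<^sup>2"
      by (intro divide_right_mono) auto
    finally show ?thesis by simp
  qed
  then have "(\<Sum>k\<in>{1..<n}. 1 / (a k)\<^sup>2) \<le> (\<Sum>k\<in>{1..<n}. exp (2 * p * real n powr s) / Cl\<^sup>2 * (q\<^sup>2) ^ (n - k))"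
    by (rule sum_mono)
  also have "\<dots> = exp (2 * p * real n powr s) / Cl\<^sup>2 * (\<Sum>k\<in>{1..<n}. (q\<^sup>2) ^ (n - k))"
    by (simp add: sum_distrib_left)
  also have "\<dots> \<le> exp (2 * p * real n powr s) / Cl\<^sup>2 * (1 / (1 - q\<^sup>2))"
    by (intro mult_left_mono sum_power_diff_le q) auto
  finally show ?thesis by (simp add: q_def)
qed

lemma tail_sum_square_times_sum_inverse_square_le:
  assumes n: "n \<ge> 1"
  shows "(tail_sum a n)\<^sup>2 * (\<Sum>k\<in>{1..<n}. 1 / (a k)\<^sup>2) \<le> Cu\<^sup>2 / ((1 - exp (- p))\<^sup>2 * Cl\<^sup>2 * (1 - (exp (- p))\<^sup>2))"
proof -
  define q where "q = exp (- p)"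
  have q0: "0 \<le> q" "q < 1" using p by (auto simp: q_def)
  have q: "q < 1" "q\<^sup>2 < 1" "q \<ge> 0" using q0 power_less_one_iff[of q 2] by auto
  define E where "E = exp (- p * real n powr s)"
  have E: "E > 0" by (simp add: E_def)
  have E2: "exp (2 * p * real n powr s) = 1 / E\<^sup>2"
    using inverse_exp_minus_square[of "p * real n powr s"] by (simp add: E_def)
  have A: "(tail_sum a n)\<^sup>2 \<le> (Cu * E / (1 - q))\<^sup>2"
    using tail_sum_le[OF n] tail_sum_a_nonneg by (intro power_mono) (auto simp: E_def q_def)
  have S: "(\<Sum>k\<in>{1..<n}. 1 / (a k)\<^sup>2) \<le> (1 / E\<^sup>2) / (Cl\<^sup>2 * (1 - q\<^sup>2))"
    using sum_inverse_square_le[OF n] by (simp add: E2 q_def)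
  have "(tail_sum a n)\<^sup>2 * (\<Sum>k\<in>{1..<n}. 1 / (a k)\<^sup>2) \<le> (Cu * E / (1 - q))\<^sup>2 * ((1 / E\<^sup>2) / (Cl\<^sup>2 * (1 - q\<^sup>2)))"
    using A S by (intro mult_mono) (auto intro!: sum_nonneg)
  also have "\<dots> = Cu\<^sup>2 / ((1 - q)\<^sup>2 * Cl\<^sup>2 * (1 - q\<^sup>2))"
  proof -
    have e: "E\<^sup>2 \<noteq> 0" using E by simp
    have b: "(1 - q)\<^sup>2 \<noteq> 0" "Cl\<^sup>2 * (1 - q\<^sup>2) \<noteq> 0" using q Cl by auto
    have "(Cu * E / (1 - q))\<^sup>2 = Cu\<^sup>2 * E\<^sup>2 / (1 - q)\<^sup>2" by (simp add: power_divide power_mult_distrib)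
    moreover have "(A * e / B) * ((1 / e) / C) = A / (B * C)" if "e \<noteq> 0" "B \<noteq> 0" "C \<noteq> 0" for A B C e :: real
      using that by (simp add: field_simps)
    ultimately show ?thesis using e b by (simp add: mult.assoc)
  qed
  finally show ?thesis by (simp add: q_def)
qed

lemma expected_risk_le:
  fixes \<psi> :: "nat \<Rightarrow> real \<Rightarrow> real" and f :: "nat \<Rightarrow> real" and lam :: "nat \<Rightarrow> nat \<Rightarrow> real"
  assumes n2: "n \<ge> 2" and b: "\<beta> > 0"
    and Mdb: "\<forall>k j. 1 \<le> k \<and> k < n \<and> n \<le> j \<longrightarrow> \<bar>ip_d n (\<psi> j) (\<psi> k)\<bar> \<le> Md"
    and orth: "\<forall>j\<in>{1..<n}. \<forall>k\<in>{1..<n}. ip_d n (\<psi> j) (\<psi> k) = (if j = k then 1 else 0)"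
    and Af: "\<forall>x\<in>{0..1}. summable (\<lambda>j. f (Suc j) * a (Suc j) * \<psi> (Suc j) x)"
    and fS: "in_Sb \<beta> f" and fK: "Sb_norm \<beta> f \<le> K"
    and lpos: "\<forall>k\<in>{1..<n}. lam n k > 0"
    and B1: "\<forall>k\<in>{1..<n}. 1 / (real k powr (2 * \<beta>) * (1 + real n * (a k)\<^sup>2 * lam n k)) \<le> B1"
    and G: "(tail_sum a n)\<^sup>2 * (\<Sum>k\<in>{1..<n}. 1 / (a k)\<^sup>2) \<le> G"
  shows "expected_risk a \<psi> lam n f \<le> 2 * K\<^sup>2 * B1 + 2 * (\<Sum>k\<in>{1..<n}. post_var a lam n k)
           + (2 * Md\<^sup>2 * G + 1) * K\<^sup>2 * real n powr (-2 * \<beta>)"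
proof -
  define Kf where "Kf = K * real n powr (-\<beta>)"
  define R where "R k = ip_d n (A_eval a \<psi> f) (\<psi> k) - a k * f k" for k
  have n1: "n \<ge> 1" using n2 by simp
  have K0: "K \<ge> 0" using Sb_norm_leD[OF fS fK] by simp
  have Rsq: "(R k)\<^sup>2 \<le> (Md * Kf * tail_sum a n)\<^sup>2" if k: "k \<in> {1..<n}" for k
  proof -
    have "\<bar>R k\<bar> \<le> Md * Kf * tail_sum a n"
      unfolding R_def
      by (rule ip_d_A_eval_aliasing_bound[OF n2 _ _ _ summable_shift Af])
        (use k orth Mdb Sb_norm_le_abs_coeff[OF fS fK _ n1 b] pos in \<open>auto simp: Kf_def\<close>)
    then show ?thesis using power_mono[of "\<bar>R k\<bar>" _ 2] by simp
  qed
  have coord: "(post_gain a lam n k * ip_d n (A_eval a \<psi> f) (\<psi> k) - f k)\<^sup>2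
        + (post_gain a lam n k)\<^sup>2 / real n + post_var a lam n k
      \<le> 2 * (((f k)\<^sup>2 * real k powr (2 * \<beta>)) * B1) + 2 * ((R k)\<^sup>2 / (a k)\<^sup>2)
        + 2 * post_var a lam n k"
    if k: "k \<in> {1..<n}" for k
  proof -
    have "ip_d n (A_eval a \<psi> f) (\<psi> k) = a k * f k + R k" by (simp add: R_def)
    moreover have "a k > 0" "lam n k > 0" "real n > 0" "real k powr (2 * \<beta>) > 0"
      using pos lpos n2 k by auto
    moreover have "1 / (real k powr (2 * \<beta>) * (1 + real n * (a k)\<^sup>2 * lam n k)) \<le> B1"
      using B1 k by auto
    ultimately show ?thesis unfolding post_gain_def post_var_def
      by (simp only:) (rule posterior_coordinate_risk_le)
  qed
  have B1pos: "B1 \<ge> 0"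
  proof -
    have "0 < lam n 1" using lpos n2 by simp
    then have "0 \<le> real n * (a 1)\<^sup>2 * lam n 1" by simp
    then show ?thesis using B1[rule_format, of 1] n2 by (simp add: order.trans[rotated])
  qed
  have sum1: "(\<Sum>k\<in>{1..<n}. 2 * (((f k)\<^sup>2 * real k powr (2 * \<beta>)) * B1)) \<le> 2 * K\<^sup>2 * B1"
  proof -
    have "(\<Sum>k\<in>{1..<n}. 2 * (((f k)\<^sup>2 * real k powr (2 * \<beta>)) * B1))
        = 2 * B1 * (\<Sum>k\<in>{1..<n}. (f k)\<^sup>2 * real k powr (2 * \<beta>))"
      by (simp add: sum_distrib_left mult_ac)
    also have "\<dots> \<le> 2 * B1 * K\<^sup>2"
      using Sb_norm_le_partial_sum[OF fS fK] B1pos by (intro mult_left_mono) auto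
    finally show ?thesis by (simp add: mult_ac)
  qed
  have sum2: "(\<Sum>k\<in>{1..<n}. 2 * ((R k)\<^sup>2 / (a k)\<^sup>2)) \<le> 2 * Md\<^sup>2 * G * K\<^sup>2 * real n powr (-2 * \<beta>)"
  proof -
    have "(\<Sum>k\<in>{1..<n}. 2 * ((R k)\<^sup>2 / (a k)\<^sup>2))
        \<le> (\<Sum>k\<in>{1..<n}. 2 * ((Md * Kf * tail_sum a n)\<^sup>2 * (1 / (a k)\<^sup>2)))"
      using Rsq by (intro sum_mono mult_left_mono) (auto simp: divide_right_mono)
    also have "\<dots> = 2 * (Md * Kf)\<^sup>2 * ((tail_sum a n)\<^sup>2 * (\<Sum>k\<in>{1..<n}. 1 / (a k)\<^sup>2))"
      by (simp add: sum_distrib_left power_mult_distrib mult_ac)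
    also have "\<dots> \<le> 2 * (Md * Kf)\<^sup>2 * G" using G by (intro mult_left_mono) auto
    also have "(Md * Kf)\<^sup>2 = Md\<^sup>2 * K\<^sup>2 * real n powr (-2 * \<beta>)"
      by (simp add: Kf_def power_mult_distrib powr_powr[symmetric] powr_realpow[symmetric]
          power2_eq_square powr_add[symmetric])
    finally show ?thesis by (simp add: mult_ac)
  qed
  have "expected_risk a \<psi> lam n f
      \<le> (\<Sum>k\<in>{1..<n}. 2 * (((f k)\<^sup>2 * real k powr (2 * \<beta>)) * B1) + 2 * ((R k)\<^sup>2 / (a k)\<^sup>2)
          + 2 * post_var a lam n k) + tail_sum (\<lambda>k. (f k)\<^sup>2) n"
    unfolding expected_risk_def by (intro add_mono sum_mono coord order_refl)
  also have "\<dots> = (\<Sum>k\<in>{1..<n}. 2 * (((f k)\<^sup>2 * real k powr (2 * \<beta>)) * B1))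
      + (\<Sum>k\<in>{1..<n}. 2 * ((R k)\<^sup>2 / (a k)\<^sup>2)) + 2 * (\<Sum>k\<in>{1..<n}. post_var a lam n k)
      + tail_sum (\<lambda>k. (f k)\<^sup>2) n"
    by (simp add: sum.distrib sum_distrib_left)
  finally show ?thesis
    using sum1 sum2 Sb_norm_le_tail_sum[OF fS fK n1 b] by (simp add: algebra_simps)
qed

end

section \<open>Contraction from a rate condition\<close>

text \<open>
  The three terms of the bound in \<open>expected_risk_le\<close>, each required to be \<open>O(\<epsilon>\<^sub>n\<^sup>2)\<close>: the
  shrinkage bias, the posterior spread and the truncation error.
\<close>

definition rate_condition :: "(nat \<Rightarrow> real) \<Rightarrow> (nat \<Rightarrow> nat \<Rightarrow> real) \<Rightarrow> real \<Rightarrow> (nat \<Rightarrow> real) \<Rightarrow> bool"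
  where "rate_condition a lam \<beta> eps \<longleftrightarrow> (\<exists>C. \<forall>\<^sub>F n in sequentially. 0 < eps n
     \<and> (\<forall>k\<in>{1..<n}. 1 / (real k powr (2 * \<beta>) * (1 + real n * (a k)\<^sup>2 * lam n k)) \<le> C * (eps n)\<^sup>2)
     \<and> (\<Sum>k\<in>{1..<n}. post_var a lam n k) \<le> C * (eps n)\<^sup>2
     \<and> real n powr (-2 * \<beta>) \<le> C * (eps n)\<^sup>2)"

lemma rate_condition_mono:
  assumes "rate_condition a lam \<beta> eps" "c > 0" "\<forall>\<^sub>F n in sequentially. eps n \<le> c * eps' n"
  shows "rate_condition a lam \<beta> eps'"
proof -
  obtain C where ev: "\<forall>\<^sub>F n in sequentially. 0 < eps n
     \<and> (\<forall>k\<in>{1..<n}. 1 / (real k powr (2 * \<beta>) * (1 + real n * (a k)\<^sup>2 * lam n k)) \<le> C * (eps n)\<^sup>2)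
     \<and> (\<Sum>k\<in>{1..<n}. post_var a lam n k) \<le> C * (eps n)\<^sup>2
     \<and> real n powr (-2 * \<beta>) \<le> C * (eps n)\<^sup>2"
    using assms(1) unfolding rate_condition_def by blast
  have "\<forall>\<^sub>F n in sequentially. 0 < eps' n
     \<and> (\<forall>k\<in>{1..<n}. 1 / (real k powr (2 * \<beta>) * (1 + real n * (a k)\<^sup>2 * lam n k)) \<le> C * c\<^sup>2 * (eps' n)\<^sup>2)
     \<and> (\<Sum>k\<in>{1..<n}. post_var a lam n k) \<le> C * c\<^sup>2 * (eps' n)\<^sup>2
     \<and> real n powr (-2 * \<beta>) \<le> C * c\<^sup>2 * (eps' n)\<^sup>2"
    using ev assms(3) eventually_ge_at_top[of 1]
  proof eventually_elim
    case (elim n)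
    then have pos: "0 < eps n" and le: "eps n \<le> c * eps' n" by auto
    have "0 < real n powr (-2 * \<beta>)" using elim by simp
    then have "0 < C * (eps n)\<^sup>2" using elim by linarith
    then have C: "0 \<le> C" using pos by (simp add: zero_less_mult_iff)
    have "0 < c * eps' n" using pos le by linarith
    then have "0 < eps' n" using assms(2) by (simp add: zero_less_mult_iff)
    moreover have "C * (eps n)\<^sup>2 \<le> C * c\<^sup>2 * (eps' n)\<^sup>2"
      using power_mono[OF le, of 2] pos C by (simp add: power_mult_distrib mult_left_mono mult.assoc)
    ultimately show ?case using elim by (auto intro: order.trans)
  qed
  then show ?thesis unfolding rate_condition_def by blast
qed

lemma SUP_tendsto_zero_if_bounded:
  fixes F :: "nat \<Rightarrow> 'a \<Rightarrow> real"
  assumes "A \<noteq> {}" and ev: "\<forall>\<^sub>F n in sequentially. \<forall>x\<in>A. 0 \<le> F n x \<and> F n x \<le> b n"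
    and "b \<longlonglongrightarrow> 0"
  shows "(\<lambda>n. SUP x\<in>A. F n x) \<longlonglongrightarrow> 0"
proof (rule tendsto_sandwich[OF _ _ tendsto_const assms(3)])
  obtain x0 where x0: "x0 \<in> A" using assms(1) by blast
  show "\<forall>\<^sub>F n in sequentially. 0 \<le> (SUP x\<in>A. F n x)"
    using ev by eventually_elim
      (use x0 in \<open>auto intro!: order.trans[OF _ cSUP_upper[OF x0]] bdd_aboveI2\<close>)
  show "\<forall>\<^sub>F n in sequentially. (SUP x\<in>A. F n x) \<le> b n"
    using ev by eventually_elim (use assms(1) in \<open>auto intro!: cSUP_least\<close>)
qed

context exp_decay
begin

lemma contracts_if_rate_condition:
  fixes \<psi> :: "nat \<Rightarrow> real \<Rightarrow> real" and lam :: "nat \<Rightarrow> nat \<Rightarrow> real" and eps M :: "nat \<Rightarrow> real"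
  assumes design: "design_cond \<psi>"
    and Af: "\<forall>f. in_Sb \<beta> f \<longrightarrow> (\<forall>x\<in>{0..1}. summable (\<lambda>j. f (Suc j) * a (Suc j) * \<psi> (Suc j) x))"
    and b: "\<beta> > 0" and K: "K > 0" and Mlim: "filterlim M at_top sequentially"
    and lpos: "\<And>n k. 1 \<le> k \<Longrightarrow> lam n k > 0"
    and rate: "rate_condition a lam \<beta> eps"
  shows "contracts a \<psi> \<beta> lam eps M K"
proof -
  obtain Md where Mdb: "\<forall>n\<ge>2. \<forall>k j. 1 \<le> k \<and> k < n \<and> n \<le> j \<longrightarrow> \<bar>ip_d n (\<psi> j) (\<psi> k)\<bar> \<le> Md"
    using design_cond_aliasing_bound[OF design] by blast
  define G where "G = Cu\<^sup>2 / ((1 - exp (- p))\<^sup>2 * Cl\<^sup>2 * (1 - (exp (- p))\<^sup>2))"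
  have G0: "G \<ge> 0"
    using p by (auto simp: G_def power_le_one_iff intro!: divide_nonneg_nonneg mult_nonneg_nonneg)
  obtain C where C: "\<forall>\<^sub>F n in sequentially. 0 < eps n
     \<and> (\<forall>k\<in>{1..<n}. 1 / (real k powr (2 * \<beta>) * (1 + real n * (a k)\<^sup>2 * lam n k)) \<le> C * (eps n)\<^sup>2)
     \<and> (\<Sum>k\<in>{1..<n}. post_var a lam n k) \<le> C * (eps n)\<^sup>2
     \<and> real n powr (-2 * \<beta>) \<le> C * (eps n)\<^sup>2"
    using rate unfolding rate_condition_def by blast
  define W where "W = (2 * K\<^sup>2 + 2 + (2 * Md\<^sup>2 * G + 1) * K\<^sup>2) * C"
  define Ball where "Ball = {f0. in_Sb \<beta> f0 \<and> Sb_norm \<beta> f0 \<le> K}"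
  have Mpos: "\<forall>\<^sub>F n in sequentially. M n > 0"
    using Mlim by (simp add: filterlim_at_top_dense)
  have "\<forall>\<^sub>F n in sequentially. \<forall>f0\<in>Ball. 0 \<le> exp_post_mass a \<psi> lam n f0 (M n * eps n)
      \<and> exp_post_mass a \<psi> lam n f0 (M n * eps n) \<le> W / (M n)\<^sup>2"
    using C Mpos eventually_ge_at_top[of 2]
  proof eventually_elim
    case (elim n)
    then have n2: "n \<ge> 2" and en: "eps n > 0" and Mn: "M n > 0"
      and V: "(\<Sum>k\<in>{1..<n}. post_var a lam n k) \<le> C * (eps n)\<^sup>2"
      and NB: "real n powr (-2 * \<beta>) \<le> C * (eps n)\<^sup>2" by auto
    have r: "M n * eps n > 0" using en Mn by simp
    have vpos: "\<forall>k\<in>{1..<n}. post_var a lam n k > 0"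
    proof
      fix k assume "k \<in> {1..<n}"
      then have "lam n k > 0" using lpos by simp
      then show "post_var a lam n k > 0"
        by (auto simp: post_var_def intro!: divide_pos_pos add_nonneg_pos)
    qed
    have orth: "\<forall>j\<in>{1..<n}. \<forall>k\<in>{1..<n}. ip_d n (\<psi> j) (\<psi> k) = (if j = k then 1 else 0)"
      using design_cond_orthonormal[OF design n2] by blast
    show ?case
    proof
      fix f0 assume "f0 \<in> Ball"
      then have fS: "in_Sb \<beta> f0" and fK: "Sb_norm \<beta> f0 \<le> K" by (auto simp: Ball_def)
      have G_n: "(tail_sum a n)\<^sup>2 * (\<Sum>k\<in>{1..<n}. 1 / (a k)\<^sup>2) \<le> G"
        unfolding G_def using n2 by (intro tail_sum_square_times_sum_inverse_square_le) simp
      have "expected_risk a \<psi> lam n f0 \<le> 2 * K\<^sup>2 * (C * (eps n)\<^sup>2)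
          + 2 * (\<Sum>k\<in>{1..<n}. post_var a lam n k) + (2 * Md\<^sup>2 * G + 1) * K\<^sup>2 * real n powr (-2 * \<beta>)"
        using Mdb n2 elim Af fS orth
        by (intro expected_risk_le[OF n2 b _ _ _ fS fK _ _ G_n]) (auto intro: lpos)
      also have "\<dots> \<le> 2 * K\<^sup>2 * (C * (eps n)\<^sup>2) + 2 * (C * (eps n)\<^sup>2)
          + (2 * Md\<^sup>2 * G + 1) * K\<^sup>2 * (C * (eps n)\<^sup>2)"
        using V NB G0 by (intro add_mono mult_left_mono order_refl) auto
      also have "\<dots> = W * (eps n)\<^sup>2" by (simp add: W_def algebra_simps)
      finally have "expected_risk a \<psi> lam n f0 / (M n * eps n)\<^sup>2 \<le> W * (eps n)\<^sup>2 / (M n * eps n)\<^sup>2"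
        by (rule divide_right_mono) simp
      moreover have "exp_post_mass a \<psi> lam n f0 (M n * eps n)
          \<le> expected_risk a \<psi> lam n f0 / (M n * eps n)\<^sup>2"
        using orth by (intro exp_post_mass_le_expected_risk[OF r vpos in_Sb_imp_summable_square[OF fS b]])
          simp
      ultimately have "exp_post_mass a \<psi> lam n f0 (M n * eps n) \<le> W * (eps n)\<^sup>2 / (M n * eps n)\<^sup>2"
        by linarith
      also have "\<dots> = W / (M n)\<^sup>2" using en by (simp add: power_mult_distrib)
      finally show "0 \<le> exp_post_mass a \<psi> lam n f0 (M n * eps n)
          \<and> exp_post_mass a \<psi> lam n f0 (M n * eps n) \<le> W / (M n)\<^sup>2"
        unfolding exp_post_mass_def post_mass_def by (auto intro!: integral_nonneg_AE AE_I2)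
    qed
  qed
  moreover have "(\<lambda>n. W / (M n)\<^sup>2) \<longlonglongrightarrow> 0"
    using filterlim_pow_at_top[OF _ Mlim, of 2]
    by (intro tendsto_divide_0[OF tendsto_const] filterlim_at_top_imp_at_infinity) simp
  moreover have "(\<lambda>k. 0) \<in> Ball" using K by (simp add: Ball_def in_Sb_def Sb_norm_def)
  ultimately show ?thesis
    unfolding contracts_def Ball_def[symmetric] by (intro SUP_tendsto_zero_if_bounded) auto
qed

end


section \<open>Elementary growth estimates\<close>

lemma power_le_exp:
  fixes y c :: real and m :: nat
  assumes y: "y \<ge> 0" and c: "c > 0" and m: "m \<ge> 1"
  shows "y ^ m \<le> (real m / c) ^ m * exp (c * y)"
proof -
  have "c * y / real m \<le> exp (c * y / real m)"
    using exp_ge_add_one_self[of "c * y / real m"] by linarith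
  then have "(c * y / real m) ^ m \<le> exp (c * y / real m) ^ m"
    using y c m by (intro power_mono) auto
  also have "exp (c * y / real m) ^ m = exp (c * y)"
    using exp_of_nat_mult[of m "c * y / real m", symmetric] m by simp
  finally have h: "(c * y / real m) ^ m \<le> exp (c * y)" .
  have yy: "real m / c * (c * y / real m) = y" using c m by (simp add: field_simps)
  have "y ^ m = (real m / c) ^ m * (c * y / real m) ^ m"
    by (simp only: power_mult_distrib[symmetric] yy)
  also have "\<dots> \<le> (real m / c) ^ m * exp (c * y)"
    using h c by (intro mult_left_mono) auto
  finally show ?thesis .
qed

lemma powr_le_exp_bound:
  fixes \<gamma> c :: real
  assumes g: "\<gamma> \<ge> 0" and c: "c > 0"
  shows "\<exists>C>0. \<forall>y\<ge>0. y powr \<gamma> \<le> C * exp (c * y)"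
proof -
  define m where "m = nat \<lceil>\<gamma>\<rceil> + 1"
  have m1: "m \<ge> 1" by (simp add: m_def)
  have gm: "\<gamma> \<le> real m" unfolding m_def using g by linarith
  define C where "C = max 1 ((real m / c) ^ m)"
  have C: "C > 0" by (simp add: C_def)
  have "y powr \<gamma> \<le> C * exp (c * y)" if y: "y \<ge> 0" for y
  proof (cases "y \<ge> 1")
    case True
    have "y powr \<gamma> \<le> y powr (real m)" using True gm by (intro powr_mono) auto
    also have "\<dots> = y ^ m" using True by (simp add: powr_realpow)
    also have "\<dots> \<le> (real m / c) ^ m * exp (c * y)" by (rule power_le_exp[OF y c m1])
    also have "\<dots> \<le> C * exp (c * y)" by (intro mult_right_mono) (auto simp: C_def)
    finally show ?thesis .
  next
    case False
    have "y powr \<gamma> \<le> 1" using False y g by (intro powr_le1) auto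
    also have "1 \<le> exp (c * y)" using c y by simp
    also have "exp (c * y) = 1 * exp (c * y)" by simp
    also have "\<dots> \<le> C * exp (c * y)" by (intro mult_right_mono) (auto simp: C_def)
    finally show ?thesis .
  qed
  then show ?thesis using C by blast
qed

lemma powr_le_exp_powr_bound:
  fixes \<gamma> c s :: real
  assumes g: "\<gamma> \<ge> 0" and c: "c > 0" and s: "s > 0"
  shows "\<exists>C>0. \<forall>t\<ge>0. t powr \<gamma> \<le> C * exp (c * t powr s)"
proof -
  obtain C where C: "C > 0" "\<forall>y\<ge>0. y powr (\<gamma> / s) \<le> C * exp (c * y)"
    using powr_le_exp_bound[of "\<gamma> / s" c] g c s by auto
  have "t powr \<gamma> \<le> C * exp (c * t powr s)" if "t \<ge> 0" for t
  proof -
    have "(t powr s) powr (\<gamma> / s) = t powr \<gamma>" using s by (simp add: powr_powr)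
    then show ?thesis using C(2)[rule_format, of "t powr s"] by simp
  qed
  then show ?thesis using C by blast
qed

lemma powr_neg_diff_ge:
  fixes k g :: real
  assumes k: "k \<ge> 2" and g: "g > 0"
  shows "g * k powr (-1 - g) \<le> (k - 1) powr (-g) - k powr (-g)"
proof -
  define u where "u = 1 / k"
  have u: "0 < u" "u < 1" using k by (auto simp: u_def)
  have "ln (1 - u) \<le> - u" using ln_le_minus_one[of "1 - u"] u by simp
  then have "g * ln (1 - u) \<le> g * (- u)" using g by (intro mult_left_mono) auto
  then have "1 + g * u \<le> 1 - g * ln (1 - u)" by simp
  also have "\<dots> \<le> exp (- g * ln (1 - u))" using exp_ge_add_one_self[of "- g * ln (1 - u)"] by simp
  also have "exp (- g * ln (1 - u)) = (1 - u) powr (-g)" using u by (simp add: powr_def)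
  finally have b: "1 + g * u \<le> (1 - u) powr (-g)" .
  have ku: "k * (1 - u) = k - 1" using k by (simp add: u_def field_simps)
  have "(k - 1) powr (-g) = (k * (1 - u)) powr (-g)" by (simp only: ku)
  also have "\<dots> = k powr (-g) * (1 - u) powr (-g)" using k u by (simp add: powr_mult)
  finally have e: "(k - 1) powr (-g) = k powr (-g) * (1 - u) powr (-g)" .
  have "k powr (-g) * (1 + g * u) \<le> k powr (-g) * (1 - u) powr (-g)"
    using b by (intro mult_left_mono) auto
  moreover have "k powr (-g) * (1 + g * u) = k powr (-g) + g * k powr (-1 - g)"
  proof -
    have "k powr (-1 - g) = k powr (-g + -1)" by (rule arg_cong[where f="\<lambda>x. k powr x"]) simp
    also have "\<dots> = k powr (-g) * k powr (-1)" using k by (simp only: powr_add)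
    also have "k powr (-1) = u" using k by (simp add: u_def powr_minus_divide)
    finally show ?thesis by (simp add: algebra_simps)
  qed
  ultimately show ?thesis using e by linarith
qed

lemma sum_powr_telescope_le:
  fixes g :: real and m :: nat
  assumes g: "g > 0" and m: "m \<ge> 1"
  shows "g * (\<Sum>k\<in>{m<..<N}. real k powr (-1 - g)) \<le> real m powr (-g) - real (max m (N - 1)) powr (-g)"
proof (induction N)
  case 0 then show ?case by simp
next
  case (Suc N)
  show ?case
  proof (cases "m < N")
    case True
    have set: "{m<..<Suc N} = insert N {m<..<N}" using True by auto
    have "g * (\<Sum>k\<in>{m<..<Suc N}. real k powr (-1 - g)) = g * (\<Sum>k\<in>{m<..<N}. real k powr (-1 - g)) + g * real N powr (-1 - g)"
      by (simp add: set algebra_simps)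
    also have "\<dots> \<le> (real m powr (-g) - real (max m (N - 1)) powr (-g)) + ((real N - 1) powr (-g) - real N powr (-g))"
      using Suc.IH powr_neg_diff_ge[of "real N" g] True m g by (intro add_mono) auto
    also have "real (max m (N - 1)) = real N - 1" using True by (simp add: of_nat_diff)
    also have "real (max m (Suc N - 1)) = real N" using True by simp
    ultimately show ?thesis by simp
  next
    case False
    then have "{m<..<Suc N} = {m<..<N}" by auto
    moreover have "max m (Suc N - 1) = m" "max m (N - 1) = m" using False by auto
    ultimately show ?thesis using Suc.IH by simp
  qed
qed

lemma sum_powr_tail_le:
  fixes g t :: real
  assumes g: "g > 0" and t: "t \<ge> 1"
  shows "(\<Sum>k\<in>{k\<in>{1..<n}. t < real k}. real k powr (-1 - g)) \<le> (2 powr g / g) * t powr (-g)"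
proof -
  define m where "m = nat \<lfloor>t\<rfloor>"
  have m1: "m \<ge> 1" using t by (simp add: m_def le_nat_floor)
  have rm: "real m = of_int \<lfloor>t\<rfloor>" using t by (simp add: m_def)
  have mt: "real m \<le> t" "t < real m + 1" unfolding rm by (rule of_int_floor_le, rule real_of_int_floor_add_one_gt)
  have sub: "{k\<in>{1..<n}. t < real k} \<subseteq> {m<..<n}" using mt by auto
  have "(\<Sum>k\<in>{k\<in>{1..<n}. t < real k}. real k powr (-1 - g)) \<le> (\<Sum>k\<in>{m<..<n}. real k powr (-1 - g))"
    by (rule sum_mono2[OF _ sub]) auto
  also have "\<dots> \<le> real m powr (-g) / g"
  proof -
    have "g * (\<Sum>k\<in>{m<..<n}. real k powr (-1 - g)) \<le> real m powr (-g) - real (max m (n - 1)) powr (-g)"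
      by (rule sum_powr_telescope_le[OF g m1])
    also have "\<dots> \<le> real m powr (-g)" by simp
    finally show ?thesis using g by (simp add: field_simps)
  qed
  also have "real m powr (-g) \<le> (t / 2) powr (-g)"
  proof (rule powr_mono2')
    show "t / 2 \<le> real m" using mt m1 by linarith
  qed (use g t in auto)
  also have "(t / 2) powr (-g) = 2 powr g * t powr (-g)"
    using t by (simp add: powr_divide powr_minus_divide divide_simps)
  finally show ?thesis using g by (simp add: divide_right_mono field_simps)
qed

lemma sum_const_initial_le:
  fixes t c :: real
  assumes c: "c \<ge> 0" and t: "t \<ge> 0"
  shows "(\<Sum>k\<in>{k\<in>{1..<n}. real k \<le> t}. c) \<le> t * c"
proof -
  have sub: "{k\<in>{1..<n}. real k \<le> t} \<subseteq> {1..nat \<lfloor>t\<rfloor>}"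
    by (auto simp: le_nat_floor)
  have "card {k\<in>{1..<n}. real k \<le> t} \<le> card {1..nat \<lfloor>t\<rfloor>}" by (rule card_mono[OF _ sub]) auto
  then have "real (card {k\<in>{1..<n}. real k \<le> t}) \<le> real (nat \<lfloor>t\<rfloor>)" by simp
  also have "\<dots> \<le> t" using t by simp
  finally show ?thesis using c by (simp add: mult_right_mono)
qed

lemma powr_powr_inverse_divide:
  fixes L D s x :: real
  assumes L: "L > 0" and D: "D > 0" and s: "s > 0"
  shows "((L / D) powr (1 / s)) powr x = D powr (- x / s) * L powr (x / s)"
proof -
  have "((L / D) powr (1 / s)) powr x = (L / D) powr (x / s)" by (simp add: powr_powr)
  also have "\<dots> = L powr (x / s) / D powr (x / s)" using L D by (simp add: powr_divide)
  also have "\<dots> = D powr (- x / s) * L powr (x / s)" using D by (simp add: powr_minus_divide field_simps)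
  finally show ?thesis .
qed

lemma shrinkage_weight_le:
  fixes w x :: real assumes w: "w \<ge> 1" and x: "x > 0"
  shows "1 / (w * (1 + x)) \<le> 1 / x" and "1 / (w * (1 + x)) \<le> 1 / w"
proof -
  have "1 * (1 + x) \<le> w * (1 + x)" using w x by (intro mult_right_mono) auto
  then have "x \<le> w * (1 + x)" by simp
  then show "1 / (w * (1 + x)) \<le> 1 / x" using x by (intro divide_left_mono) auto
  have "w \<le> w * (1 + x)" using mult_left_mono[of 1 "1 + x" w] w x by simp
  then show "1 / (w * (1 + x)) \<le> 1 / w" using w x by (intro divide_left_mono) auto
qed

lemma shrinkage_variance_le:
  fixes lam d :: real assumes lam: "lam > 0" and d: "d > 0"
  shows "lam / (d * lam + 1) \<le> 1 / d" and "lam / (d * lam + 1) \<le> lam"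
proof -
  have "lam / (d * lam + 1) \<le> lam / (d * lam)"
    using lam d by (intro divide_left_mono mult_pos_pos add_pos_pos) auto
  then show "lam / (d * lam + 1) \<le> 1 / d" using lam by simp
  show "lam / (d * lam + 1) \<le> lam" using lam d by (simp add: divide_le_eq)
qed

lemma sum_split_at_le:
  fixes h g :: "nat \<Rightarrow> real" and t B :: real
  assumes t: "t \<ge> 0" and B: "B \<ge> 0"
    and small: "\<And>k. k \<in> {1..<n} \<Longrightarrow> real k \<le> t \<Longrightarrow> h k \<le> B"
    and large: "\<And>k. k \<in> {1..<n} \<Longrightarrow> t < real k \<Longrightarrow> h k \<le> g k"
  shows "(\<Sum>k\<in>{1..<n}. h k) \<le> t * B + (\<Sum>k\<in>{k\<in>{1..<n}. t < real k}. g k)"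
proof -
  have "(\<Sum>k\<in>{1..<n}. h k)
      \<le> (\<Sum>k\<in>{1..<n}. (if real k \<le> t then B else 0) + (if t < real k then g k else 0))"
    using small large by (intro sum_mono) auto
  also have "\<dots> = (\<Sum>k\<in>{k\<in>{1..<n}. real k \<le> t}. B) + (\<Sum>k\<in>{k\<in>{1..<n}. t < real k}. g k)"
    by (simp only: sum.distrib sum.inter_filter[OF finite_atLeastLessThan])
  also have "\<dots> \<le> t * B + (\<Sum>k\<in>{k\<in>{1..<n}. t < real k}. g k)"
    using sum_const_initial_le[OF B t] by simp
  finally show ?thesis .
qed

section \<open>Rates for the two priors\<close>

context exp_lower_bound
begin

text \<open>
  For the prior \<open>\<lambda>\<^sub>k = \<rho>\<^sup>2 k\<^bsup>-1-2\<alpha>\<^esup>\<close> the cut-off \<open>t\<close> is chosen with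
  \<open>exp (4 p t\<^sup>s) = \<rho>\<^sup>2 n\<close>: below it the data dominate the prior, above it the prior dominates.
\<close>

lemma polynomial_prior_shrinkage_le:
  assumes b: "\<beta> > 0" and al: "\<alpha> > 0" and rho: "\<rho> > 0" and k: "k \<in> {1..<n}" and t1: "t \<ge> 1"
    and E: "exp (2 * p * t powr s) * exp (2 * p * t powr s) = \<rho>\<^sup>2 * real n"
    and Cp1: "t powr (1 + 2 * \<alpha> + 2 * \<beta>) \<le> Cp1 * exp (2 * p * t powr s)"
  shows "1 / (real k powr (2 * \<beta>) * (1 + real n * (a k)\<^sup>2 * (\<rho>\<^sup>2 * real k powr (-1 - 2 * \<alpha>))))
           \<le> max (Cp1 / Cl\<^sup>2) 1 * t powr (-2 * \<beta>)"
proof -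
  define x where "x = real n * (a k)\<^sup>2 * (\<rho>\<^sup>2 * real k powr (-1 - 2 * \<alpha>))"
  have k1: "k \<ge> 1" and n1: "n \<ge> 1" using k by auto
  have x0: "x > 0" using pos[OF k1] rho n1 k1 by (simp add: x_def)
  have kb: "real k powr (2 * \<beta>) \<ge> 1" using k1 b by (intro ge_one_powr_ge_zero) auto
  have tb0: "t powr (-2 * \<beta>) > 0" using t1 by simp
  have "1 / (real k powr (2 * \<beta>) * (1 + x)) \<le> max (Cp1 / Cl\<^sup>2) 1 * t powr (-2 * \<beta>)"
  proof (cases "real k \<le> t")
    case True
    have "1 / (real k powr (2 * \<beta>) * (1 + x)) \<le> 1 / x" by (rule shrinkage_weight_le(1)[OF kb x0])
    also have "1 / x = real k powr (1 + 2 * \<alpha>) / \<rho>\<^sup>2 * (1 / (real n * (a k)\<^sup>2))"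
      using x0 rho n1 pos[OF k1] k1
      by (simp add: x_def powr_minus_divide[symmetric] field_simps powr_minus)
    also have "\<dots> \<le> t powr (1 + 2 * \<alpha>) / \<rho>\<^sup>2 * (exp (2 * p * t powr s) / (Cl\<^sup>2 * real n))"
      using inverse_n_square_le[OF k1 True n1] powr_mono2[of "1 + 2 * \<alpha>" "real k" t] True al
      by (intro mult_mono divide_right_mono) auto
    also have "\<dots> = t powr (1 + 2 * \<alpha> + 2 * \<beta>) * t powr (-2 * \<beta>) / (Cl\<^sup>2 * exp (2 * p * t powr s))"
      using E rho n1 Cl t1 by (simp add: field_simps flip: powr_add)
    also have "\<dots> \<le> Cp1 * exp (2 * p * t powr s) * t powr (-2 * \<beta>) / (Cl\<^sup>2 * exp (2 * p * t powr s))"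
      using Cp1 tb0 Cl by (intro divide_right_mono mult_right_mono) auto
    also have "\<dots> = (Cp1 / Cl\<^sup>2) * t powr (-2 * \<beta>)" using Cl by (simp add: field_simps)
    also have "\<dots> \<le> max (Cp1 / Cl\<^sup>2) 1 * t powr (-2 * \<beta>)" using tb0 by (intro mult_right_mono) auto
    finally show ?thesis .
  next
    case False
    have "1 / (real k powr (2 * \<beta>) * (1 + x)) \<le> 1 / real k powr (2 * \<beta>)"
      by (rule shrinkage_weight_le(2)[OF kb x0])
    also have "\<dots> = real k powr (-2 * \<beta>)" using k1 by (simp add: powr_minus_divide)
    also have "\<dots> \<le> 1 * t powr (-2 * \<beta>)" using False t1 b by (simp add: powr_mono2')
    also have "\<dots> \<le> max (Cp1 / Cl\<^sup>2) 1 * t powr (-2 * \<beta>)" using tb0 by (intro mult_right_mono) auto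
    finally show ?thesis .
  qed
  then show ?thesis by (simp add: x_def)
qed

lemma polynomial_prior_variance_le:
  assumes al: "\<alpha> > 0" and rho: "\<rho> > 0" and n1: "n \<ge> 1" and t1: "t \<ge> 1"
    and E: "exp (2 * p * t powr s) * exp (2 * p * t powr s) = \<rho>\<^sup>2 * real n"
    and Cp2: "t powr (1 + 2 * \<alpha>) \<le> Cp2 * exp (2 * p * t powr s)"
  shows "(\<Sum>k\<in>{1..<n}. post_var a (\<lambda>_ k. \<rho>\<^sup>2 * real k powr (-1 - 2 * \<alpha>)) n k)
           \<le> (Cp2 / Cl\<^sup>2 + 2 powr (2 * \<alpha>) / (2 * \<alpha>)) * \<rho>\<^sup>2 * t powr (-2 * \<alpha>)"
proof -
  define B where "B = exp (2 * p * t powr s) / (Cl\<^sup>2 * real n)"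
  have split: "(\<Sum>k\<in>{1..<n}. post_var a (\<lambda>_ k. \<rho>\<^sup>2 * real k powr (-1 - 2 * \<alpha>)) n k)
      \<le> t * B + (\<Sum>k\<in>{k\<in>{1..<n}. t < real k}. \<rho>\<^sup>2 * real k powr (-1 - 2 * \<alpha>))"
  proof (rule sum_split_at_le)
    show "t \<ge> 0" "B \<ge> 0" using t1 Cl n1 by (auto simp: B_def)
    fix k assume k: "k \<in> {1..<n}"
    have "a k > 0" using k pos by simp
    then have lk: "\<rho>\<^sup>2 * real k powr (-1 - 2 * \<alpha>) > 0" and d: "real n * (a k)\<^sup>2 > 0"
      using rho n1 k by auto
    show "post_var a (\<lambda>_ k. \<rho>\<^sup>2 * real k powr (-1 - 2 * \<alpha>)) n k \<le> B" if "real k \<le> t"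
      using shrinkage_variance_le(1)[OF lk d] inverse_n_square_le[of k t n] k n1 that
      by (simp add: post_var_def B_def)
    show "post_var a (\<lambda>_ k. \<rho>\<^sup>2 * real k powr (-1 - 2 * \<alpha>)) n k \<le> \<rho>\<^sup>2 * real k powr (-1 - 2 * \<alpha>)"
      using shrinkage_variance_le(2)[OF lk d] by (simp add: post_var_def)
  qed
  have small: "t * B \<le> (Cp2 / Cl\<^sup>2) * \<rho>\<^sup>2 * t powr (-2 * \<alpha>)"
  proof -
    have "t = t powr (1 + 2 * \<alpha>) * t powr (-2 * \<alpha>)" using t1 by (simp flip: powr_add)
    also have "\<dots> \<le> Cp2 * exp (2 * p * t powr s) * t powr (-2 * \<alpha>)"
      using Cp2 t1 by (intro mult_right_mono) auto
    finally have "t * B \<le> Cp2 * exp (2 * p * t powr s) * t powr (-2 * \<alpha>) * B"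
      using Cl n1 by (intro mult_right_mono) (auto simp: B_def)
    also have "\<dots> = (Cp2 / Cl\<^sup>2) * \<rho>\<^sup>2 * t powr (-2 * \<alpha>)"
      using E Cl n1 by (simp add: B_def field_simps)
    finally show ?thesis .
  qed
  have large: "(\<Sum>k\<in>{k\<in>{1..<n}. t < real k}. \<rho>\<^sup>2 * real k powr (-1 - 2 * \<alpha>))
      \<le> (2 powr (2 * \<alpha>) / (2 * \<alpha>)) * \<rho>\<^sup>2 * t powr (-2 * \<alpha>)"
    using mult_left_mono[OF sum_powr_tail_le[of "2 * \<alpha>" t n], of "\<rho>\<^sup>2"] al t1
    by (simp add: sum_distrib_left algebra_simps)
  show ?thesis using split small large by (simp add: algebra_simps)
qed

end

lemma max_rate_square_ge:
  fixes L r :: real assumes L: "L > 0" and r: "r > 0"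
  shows "L powr (-2 * \<beta> / s) \<le> (max (L powr (- \<beta> / s)) (r * L powr (- \<alpha> / s)))\<^sup>2"
    and "r\<^sup>2 * L powr (-2 * \<alpha> / s) \<le> (max (L powr (- \<beta> / s)) (r * L powr (- \<alpha> / s)))\<^sup>2"
proof -
  have "(L powr (- \<beta> / s))\<^sup>2 \<le> (max (L powr (- \<beta> / s)) (r * L powr (- \<alpha> / s)))\<^sup>2"
    by (intro power_mono) auto
  moreover have "(L powr (- \<beta> / s))\<^sup>2 = L powr (-2 * \<beta> / s)"
    using L by (simp add: power2_eq_square powr_add[symmetric])
  ultimately show "L powr (-2 * \<beta> / s) \<le> (max (L powr (- \<beta> / s)) (r * L powr (- \<alpha> / s)))\<^sup>2"
    by simp
  have "(r * L powr (- \<alpha> / s))\<^sup>2 \<le> (max (L powr (- \<beta> / s)) (r * L powr (- \<alpha> / s)))\<^sup>2"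
    using r by (intro power_mono) auto
  moreover have "(r * L powr (- \<alpha> / s))\<^sup>2 = r\<^sup>2 * L powr (-2 * \<alpha> / s)"
    using L by (simp add: power2_eq_square powr_add[symmetric] mult_ac)
  ultimately show "r\<^sup>2 * L powr (-2 * \<alpha> / s) \<le> (max (L powr (- \<beta> / s)) (r * L powr (- \<alpha> / s)))\<^sup>2"
    by simp
qed

text \<open>If \<open>n\<^sup>s < log (\<rho>\<^sup>2 n)\<close> then \<open>\<rho>\<^sup>2\<close> is exponentially large, so the variance part of the rate is bounded below.\<close>

lemma powr_neg_le_polynomial_rate:
  fixes r L :: real and n :: nat
  assumes n1: "n \<ge> 1" and r: "r > 0" and L: "exp L = r\<^sup>2 * real n" "L > 0"
    and s: "s \<ge> 1" and b: "\<beta> > 0"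
    and Cq: "Cq > 0" "L powr (2 * \<alpha> / s) \<le> Cq * exp (1/2 * L)"
    and Cr: "Cr > 0" "real n \<le> Cr * exp (1/2 * real n)"
  shows "real n powr (-2 * \<beta>) \<le> max 1 (Cq * Cr) * (max (L powr (- \<beta> / s)) (r * L powr (- \<alpha> / s)))\<^sup>2"
proof -
  define e where "e = max (L powr (- \<beta> / s)) (r * L powr (- \<alpha> / s))"
  have s0: "s > 0" using s by simp
  have e1: "L powr (-2 * \<beta> / s) \<le> e\<^sup>2" and e2: "r\<^sup>2 * L powr (-2 * \<alpha> / s) \<le> e\<^sup>2"
    unfolding e_def using max_rate_square_ge[OF L(2) r] by auto
  show ?thesis
  proof (cases "L \<le> real n powr s")
    case True
    have "real n powr (-2 * \<beta>) = (real n powr s) powr (-2 * \<beta> / s)" using s0 by (simp add: powr_powr)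
    also have "\<dots> \<le> L powr (-2 * \<beta> / s)"
      using True L b s0 by (intro powr_mono2') (auto simp: divide_nonpos_pos)
    also have "\<dots> \<le> 1 * e\<^sup>2" using e1 by simp
    also have "\<dots> \<le> max 1 (Cq * Cr) * e\<^sup>2" by (intro mult_right_mono) auto
    finally show ?thesis by (simp add: e_def)
  next
    case False
    have "real n \<le> real n powr s" using powr_mono[of 1 s "real n"] n1 s by simp
    then have "exp (1/2 * real n) \<le> exp (1/2 * L)" using False by simp
    then have nr: "real n \<le> Cr * exp (1/2 * L)"
      using Cr by (meson mult_left_mono order.trans less_imp_le)
    have q0: "L powr (2 * \<alpha> / s) > 0" using L by simp
    have "L powr (2 * \<alpha> / s) * real n \<le> Cq * exp (1/2 * L) * (Cr * exp (1/2 * L))"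
      using Cq nr q0 n1 by (intro mult_mono) auto
    then have Y: "real n * L powr (2 * \<alpha> / s) \<le> Cq * Cr * exp L"
      by (simp add: mult_ac flip: exp_add)
    have X: "r\<^sup>2 * L powr (-2 * \<alpha> / s) = exp L / (real n * L powr (2 * \<alpha> / s))"
      using L n1 by (simp add: powr_minus_divide field_simps)
    have "1 \<le> Cq * Cr * (r\<^sup>2 * L powr (-2 * \<alpha> / s))"
      unfolding X using Y n1 q0 by (simp add: le_divide_eq)
    also have "\<dots> \<le> Cq * Cr * e\<^sup>2" using e2 Cq Cr by (intro mult_left_mono) auto
    finally have "1 \<le> Cq * Cr * e\<^sup>2" .
    moreover have "real n powr (-2 * \<beta>) \<le> 1" using powr_mono[of "-2 * \<beta>" 0 "real n"] n1 b by simp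
    ultimately have "real n powr (-2 * \<beta>) \<le> Cq * Cr * e\<^sup>2" by linarith
    also have "\<dots> \<le> max 1 (Cq * Cr) * e\<^sup>2" by (intro mult_right_mono) auto
    finally show ?thesis by (simp add: e_def)
  qed
qed

context exp_lower_bound
begin

lemma rate_condition_polynomial_prior:
  fixes \<rho> :: "nat \<Rightarrow> real"
  assumes b: "\<beta> > 0" and al: "\<alpha> > 0" and rho: "\<forall>n. \<rho> n > 0"
    and rlim: "filterlim (\<lambda>n. (\<rho> n)\<^sup>2 * real n) at_top sequentially"
  shows "rate_condition a (\<lambda>n k. (\<rho> n)\<^sup>2 * real k powr (-1 - 2 * \<alpha>)) \<beta>
           (\<lambda>n. max (ln ((\<rho> n)\<^sup>2 * real n) powr (- \<beta> / s)) (\<rho> n * ln ((\<rho> n)\<^sup>2 * real n) powr (- \<alpha> / s)))"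
proof -
  have s0: "s > 0" using s by simp
  obtain Cp1 where Cp1: "\<forall>t\<ge>0. t powr (1 + 2 * \<alpha> + 2 * \<beta>) \<le> Cp1 * exp (2 * p * t powr s)"
    using powr_le_exp_powr_bound[of "1 + 2 * \<alpha> + 2 * \<beta>" "2 * p" s] al b p s0 by auto
  obtain Cp2 where Cp2: "\<forall>t\<ge>0. t powr (1 + 2 * \<alpha>) \<le> Cp2 * exp (2 * p * t powr s)"
    using powr_le_exp_powr_bound[of "1 + 2 * \<alpha>" "2 * p" s] al p s0 by auto
  obtain Cq where Cq: "Cq > 0" "\<forall>y\<ge>0. y powr (2 * \<alpha> / s) \<le> Cq * exp (1/2 * y)"
    using powr_le_exp_bound[of "2 * \<alpha> / s" "1/2"] al s0 by auto
  obtain Cr where Cr: "Cr > 0" "\<forall>y::real\<ge>0. y powr 1 \<le> Cr * exp (1/2 * y)"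
    using powr_le_exp_bound[of 1 "1/2"] by auto
  define Ca where "Ca = max (Cp1 / Cl\<^sup>2) 1 * (4 * p) powr (2 * \<beta> / s)"
  define Cb where "Cb = (Cp2 / Cl\<^sup>2 + 2 powr (2 * \<alpha>) / (2 * \<alpha>)) * (4 * p) powr (2 * \<alpha> / s)"
  define C where "C = Ca + Cb + max 1 (Cq * Cr)"
  have Ca: "Ca > 0" using p by (simp add: Ca_def)
  have "0 \<le> Cp2 * exp (2 * p * 1 powr s)" using Cp2[rule_format, of 1] by simp
  then have "Cp2 \<ge> 0" by (simp add: zero_le_mult_iff)
  then have Cb: "Cb > 0" using Cl al p by (simp add: Cb_def add_nonneg_pos)
  have "\<forall>\<^sub>F n in sequentially. ln ((\<rho> n)\<^sup>2 * real n) \<ge> 4 * p"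
    using filterlim_compose[OF ln_at_top rlim] by (simp add: filterlim_at_top)
  then have "\<forall>\<^sub>F n in sequentially.
      0 < max (ln ((\<rho> n)\<^sup>2 * real n) powr (- \<beta> / s)) (\<rho> n * ln ((\<rho> n)\<^sup>2 * real n) powr (- \<alpha> / s))
    \<and> (\<forall>k\<in>{1..<n}. 1 / (real k powr (2 * \<beta>) * (1 + real n * (a k)\<^sup>2 * ((\<rho> n)\<^sup>2 * real k powr (-1 - 2 * \<alpha>))))
        \<le> C * (max (ln ((\<rho> n)\<^sup>2 * real n) powr (- \<beta> / s)) (\<rho> n * ln ((\<rho> n)\<^sup>2 * real n) powr (- \<alpha> / s)))\<^sup>2)
    \<and> (\<Sum>k\<in>{1..<n}. post_var a (\<lambda>n k. (\<rho> n)\<^sup>2 * real k powr (-1 - 2 * \<alpha>)) n k)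
        \<le> C * (max (ln ((\<rho> n)\<^sup>2 * real n) powr (- \<beta> / s)) (\<rho> n * ln ((\<rho> n)\<^sup>2 * real n) powr (- \<alpha> / s)))\<^sup>2
    \<and> real n powr (-2 * \<beta>)
        \<le> C * (max (ln ((\<rho> n)\<^sup>2 * real n) powr (- \<beta> / s)) (\<rho> n * ln ((\<rho> n)\<^sup>2 * real n) powr (- \<alpha> / s)))\<^sup>2"
    using eventually_ge_at_top[of 1]
  proof eventually_elim
    case (elim n)
    define r where "r = \<rho> n"
    define L where "L = ln (r\<^sup>2 * real n)"
    define e where "e = max (L powr (- \<beta> / s)) (r * L powr (- \<alpha> / s))"
    define t where "t = (L / (4 * p)) powr (1 / s)"
    have n1: "n \<ge> 1" and L4: "L \<ge> 4 * p" using elim by (auto simp: L_def r_def)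
    have Lpos: "L > 0" using L4 p by simp
    have r: "r > 0" using rho by (simp add: r_def)
    have eL: "exp L = r\<^sup>2 * real n" using r n1 by (simp add: L_def)
    have t1: "t \<ge> 1"
      unfolding t_def using L4 p s0 by (intro ge_one_powr_ge_zero) (auto simp: field_simps)
    have ts: "t powr s = L / (4 * p)" unfolding t_def using Lpos p s0 by (simp add: powr_powr)
    have E: "exp (2 * p * t powr s) * exp (2 * p * t powr s) = r\<^sup>2 * real n"
      unfolding ts eL[symmetric] exp_add[symmetric] using p by (simp add: field_simps)
    have e0: "e > 0" using Lpos by (simp add: e_def less_max_iff_disj)
    have e1: "L powr (-2 * \<beta> / s) \<le> e\<^sup>2" and e2: "r\<^sup>2 * L powr (-2 * \<alpha> / s) \<le> e\<^sup>2"
      unfolding e_def using max_rate_square_ge[OF Lpos r] by auto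
    have D0: "4 * p > 0" using p by simp
    have tb: "t powr (-2 * \<beta>) = (4 * p) powr (2 * \<beta> / s) * L powr (-2 * \<beta> / s)"
      using powr_powr_inverse_divide[OF Lpos D0 s0, of "-2 * \<beta>"] by (simp add: t_def)
    have ta: "t powr (-2 * \<alpha>) = (4 * p) powr (2 * \<alpha> / s) * L powr (-2 * \<alpha> / s)"
      using powr_powr_inverse_divide[OF Lpos D0 s0, of "-2 * \<alpha>"] by (simp add: t_def)
    have A: "1 / (real k powr (2 * \<beta>) * (1 + real n * (a k)\<^sup>2 * (r\<^sup>2 * real k powr (-1 - 2 * \<alpha>))))
        \<le> C * e\<^sup>2" if k: "k \<in> {1..<n}" for k
    proof -
      have "1 / (real k powr (2 * \<beta>) * (1 + real n * (a k)\<^sup>2 * (r\<^sup>2 * real k powr (-1 - 2 * \<alpha>))))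
          \<le> max (Cp1 / Cl\<^sup>2) 1 * t powr (-2 * \<beta>)"
        by (rule polynomial_prior_shrinkage_le[OF b al r k t1 E]) (use Cp1 t1 in auto)
      also have "\<dots> = Ca * L powr (-2 * \<beta> / s)" unfolding tb Ca_def by (simp add: mult_ac)
      also have "\<dots> \<le> Ca * e\<^sup>2" using e1 Ca by (intro mult_left_mono) auto
      also have "\<dots> \<le> C * e\<^sup>2" using Cb by (intro mult_right_mono) (auto simp: C_def)
      finally show ?thesis .
    qed
    have B: "(\<Sum>k\<in>{1..<n}. post_var a (\<lambda>_ k. r\<^sup>2 * real k powr (-1 - 2 * \<alpha>)) n k) \<le> C * e\<^sup>2"
    proof -
      have "(\<Sum>k\<in>{1..<n}. post_var a (\<lambda>_ k. r\<^sup>2 * real k powr (-1 - 2 * \<alpha>)) n k)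
          \<le> (Cp2 / Cl\<^sup>2 + 2 powr (2 * \<alpha>) / (2 * \<alpha>)) * r\<^sup>2 * t powr (-2 * \<alpha>)"
        by (rule polynomial_prior_variance_le[OF al r n1 t1 E]) (use Cp2 t1 in auto)
      also have "\<dots> = Cb * (r\<^sup>2 * L powr (-2 * \<alpha> / s))" unfolding ta Cb_def by (simp add: mult_ac)
      also have "\<dots> \<le> Cb * e\<^sup>2" using e2 Cb by (intro mult_left_mono) auto
      also have "\<dots> \<le> C * e\<^sup>2" using Ca by (intro mult_right_mono) (auto simp: C_def)
      finally show ?thesis .
    qed
    have "real n powr (-2 * \<beta>) \<le> max 1 (Cq * Cr) * e\<^sup>2"
      unfolding e_def
      by (rule powr_neg_le_polynomial_rate[OF n1 r eL Lpos s b Cq(1) _ Cr(1)])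
        (use Cq(2) Cr(2) Lpos n1 in auto)
    also have "\<dots> \<le> C * e\<^sup>2" using Ca Cb by (intro mult_right_mono) (auto simp: C_def)
    finally show ?case using A B e0 by (simp add: e_def L_def r_def post_var_def)
  qed
  then show ?thesis unfolding rate_condition_def by blast
qed

lemma exponential_prior_shrinkage_le:
  assumes b: "\<beta> > 0" and al: "\<alpha> > 0" and k: "k \<in> {1..<n}"
    and eL: "exp L = real n" and L2: "L \<ge> 2 * (2 * p + \<alpha>)"
    and Cq: "Cq > 0" "exp (- (1/2) * L) \<le> Cq * L powr (-2 * \<beta> / s)"
  shows "1 / (real k powr (2 * \<beta>) * (1 + real n * (a k)\<^sup>2 * exp (- \<alpha> * real k powr s)))
           \<le> (Cq / Cl\<^sup>2 + (2 * (2 * p + \<alpha>)) powr (2 * \<beta> / s)) * L powr (-2 * \<beta> / s)"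
proof -
  define D where "D = 2 * (2 * p + \<alpha>)"
  define t where "t = (L / D) powr (1 / s)"
  define x where "x = real n * (a k)\<^sup>2 * exp (- \<alpha> * real k powr s)"
  have s0: "s > 0" using s by simp
  have D0: "D > 0" using p al by (simp add: D_def)
  have Lpos: "L > 0" using L2 D0 by (simp add: D_def)
  have k1: "k \<ge> 1" and n1: "n \<ge> 1" using k by auto
  have t1: "t \<ge> 1" unfolding t_def using L2 D0 s0 by (intro ge_one_powr_ge_zero) (auto simp: D_def)
  have ts: "t powr s = L / D" unfolding t_def using Lpos D0 s0 by (simp add: powr_powr)
  have x0: "x > 0" using pos[OF k1] n1 by (simp add: x_def)
  have kb: "real k powr (2 * \<beta>) \<ge> 1" using k1 b by (intro ge_one_powr_ge_zero) auto
  have Lb0: "L powr (-2 * \<beta> / s) > 0" using Lpos by simp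
  have "1 / (real k powr (2 * \<beta>) * (1 + x)) \<le> (Cq / Cl\<^sup>2 + D powr (2 * \<beta> / s)) * L powr (-2 * \<beta> / s)"
  proof (cases "real k \<le> t")
    case True
    have "1 / (real k powr (2 * \<beta>) * (1 + x)) \<le> 1 / x" by (rule shrinkage_weight_le(1)[OF kb x0])
    also have "1 / x = 1 / (real n * (a k)\<^sup>2) * exp (\<alpha> * real k powr s)"
      by (simp add: x_def exp_minus field_simps)
    also have "\<dots> \<le> exp (2 * p * real k powr s) / (Cl\<^sup>2 * real n) * exp (\<alpha> * real k powr s)"
      using inverse_n_square_le[OF k1 order_refl n1] by (intro mult_right_mono) auto
    also have "\<dots> = exp ((2 * p + \<alpha>) * real k powr s - L) / Cl\<^sup>2"
      using eL[symmetric] by (simp add: exp_diff exp_add[symmetric] algebra_simps)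
    also have "\<dots> \<le> exp (- (1/2) * L) / Cl\<^sup>2"
    proof -
      have "(2 * p + \<alpha>) * real k powr s \<le> (2 * p + \<alpha>) * (L / D)"
        using True k1 s0 p al ts by (intro mult_left_mono) (auto simp flip: ts intro: powr_mono2)
      also have "\<dots> = L / 2" using D0 by (simp add: D_def field_simps)
      finally have "(2 * p + \<alpha>) * real k powr s - L \<le> - (1/2) * L" by linarith
      then show ?thesis by (intro divide_right_mono) simp_all
    qed
    also have "\<dots> \<le> Cq * L powr (-2 * \<beta> / s) / Cl\<^sup>2" using Cq by (intro divide_right_mono) auto
    also have "\<dots> \<le> (Cq / Cl\<^sup>2 + D powr (2 * \<beta> / s)) * L powr (-2 * \<beta> / s)"
      using Lb0 by (simp add: field_simps)
    finally show ?thesis .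
  next
    case False
    have "1 / (real k powr (2 * \<beta>) * (1 + x)) \<le> 1 / real k powr (2 * \<beta>)"
      by (rule shrinkage_weight_le(2)[OF kb x0])
    also have "\<dots> = real k powr (-2 * \<beta>)" using k1 by (simp add: powr_minus_divide)
    also have "\<dots> \<le> t powr (-2 * \<beta>)" using False t1 b by (intro powr_mono2') auto
    also have "t powr (-2 * \<beta>) = D powr (2 * \<beta> / s) * L powr (-2 * \<beta> / s)"
      unfolding t_def using powr_powr_inverse_divide[OF Lpos D0 s0, of "-2 * \<beta>"] by simp
    also have "\<dots> \<le> (Cq / Cl\<^sup>2 + D powr (2 * \<beta> / s)) * L powr (-2 * \<beta> / s)"
      using Lb0 Cl Cq by (intro mult_right_mono) auto
    finally show ?thesis .
  qed
  then show ?thesis by (simp add: x_def D_def)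
qed

lemma exponential_prior_variance_le:
  assumes b: "\<beta> > 0" and al: "\<alpha> > 0" and n1: "n \<ge> 1"
    and eL: "exp L = real n" and L4: "L \<ge> 4 * p"
    and Cw: "L powr ((1 + 2 * \<beta>) / s) \<le> Cw * exp (1/2 * L)"
    and Ce: "Ce > 0" "\<forall>y\<ge>0. y powr (1 + 2 * \<beta>) \<le> Ce * exp (\<alpha> * y)"
  shows "(\<Sum>k\<in>{1..<n}. post_var a (\<lambda>_ k. exp (- \<alpha> * real k powr s)) n k)
           \<le> (Cw * (4 * p) powr (- 1 / s) / Cl\<^sup>2 + Ce * (2 powr (2 * \<beta>) / (2 * \<beta>)) * (4 * p) powr (2 * \<beta> / s))
             * L powr (-2 * \<beta> / s)"
proof -
  define t where "t = (L / (4 * p)) powr (1 / s)"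
  define B where "B = exp (- (1/2) * L) / Cl\<^sup>2"
  have s0: "s > 0" using s by simp
  have D0: "4 * p > 0" using p by simp
  have Lpos: "L > 0" using L4 p by simp
  have t1: "t \<ge> 1" unfolding t_def using L4 p s0 by (intro ge_one_powr_ge_zero) (auto simp: field_simps)
  have ts: "t powr s = L / (4 * p)" unfolding t_def using Lpos p s0 by (simp add: powr_powr)
  have split: "(\<Sum>k\<in>{1..<n}. post_var a (\<lambda>_ k. exp (- \<alpha> * real k powr s)) n k)
      \<le> t * B + (\<Sum>k\<in>{k\<in>{1..<n}. t < real k}. Ce * real k powr (-1 - 2 * \<beta>))"
  proof (rule sum_split_at_le)
    show "t \<ge> 0" "B \<ge> 0" using t1 by (auto simp: B_def)
    fix k assume k: "k \<in> {1..<n}"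
    have "a k > 0" using k pos by simp
    then have lk: "exp (- \<alpha> * real k powr s) > 0" and d: "real n * (a k)\<^sup>2 > 0" using n1 by auto
    show "post_var a (\<lambda>_ k. exp (- \<alpha> * real k powr s)) n k \<le> B" if kt: "real k \<le> t"
    proof -
      have "post_var a (\<lambda>_ k. exp (- \<alpha> * real k powr s)) n k \<le> 1 / (real n * (a k)\<^sup>2)"
        using shrinkage_variance_le(1)[OF lk d] by (simp add: post_var_def)
      also have "\<dots> \<le> exp (2 * p * t powr s) / (Cl\<^sup>2 * real n)"
        using inverse_n_square_le[OF _ kt n1] k by simp
      also have "\<dots> = B"
      proof -
        have eh: "exp L = exp (1/2 * L) * exp (1/2 * L)" by (simp add: exp_add[symmetric])
        have em: "exp (- (1/2) * L) = 1 / exp (1/2 * L)" by (simp add: exp_minus field_simps)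
        have E: "exp (2 * p * t powr s) = exp (1/2 * L)" using p by (simp add: ts)
        show ?thesis unfolding B_def E eL[symmetric] eh em by (simp add: field_simps)
      qed
      finally show ?thesis .
    qed
    show "post_var a (\<lambda>_ k. exp (- \<alpha> * real k powr s)) n k \<le> Ce * real k powr (-1 - 2 * \<beta>)"
    proof -
      have "post_var a (\<lambda>_ k. exp (- \<alpha> * real k powr s)) n k \<le> exp (- \<alpha> * real k powr s)"
        using shrinkage_variance_le(2)[OF lk d] by (simp add: post_var_def)
      also have "\<dots> \<le> exp (- \<alpha> * real k)" using powr_mono[of 1 s "real k"] k s al by simp
      also have "\<dots> = 1 / exp (\<alpha> * real k)" by (simp add: exp_minus field_simps)
      also have "\<dots> \<le> Ce * (1 / real k powr (1 + 2 * \<beta>))"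
        using Ce(2)[rule_format, of "real k"] k by (simp add: field_simps)
      also have "\<dots> = Ce * real k powr (-1 - 2 * \<beta>)"
        using k by (simp add: powr_minus_divide[symmetric])
      finally show ?thesis .
    qed
  qed
  have small: "t * B \<le> Cw * (4 * p) powr (- 1 / s) / Cl\<^sup>2 * L powr (-2 * \<beta> / s)"
  proof -
    have tt: "t = (4 * p) powr (- 1 / s) * L powr (1 / s)"
      unfolding t_def using powr_powr_inverse_divide[OF Lpos D0 s0, of 1] by simp
    have "L powr (1 / s) = L powr ((1 + 2 * \<beta>) / s) * L powr (-2 * \<beta> / s)"
      using Lpos by (simp add: powr_add[symmetric] add_divide_distrib)
    also have "\<dots> \<le> Cw * exp (1/2 * L) * L powr (-2 * \<beta> / s)" using Cw by (intro mult_right_mono) auto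
    finally have "t * B \<le> (4 * p) powr (- 1 / s) * (Cw * exp (1/2 * L) * L powr (-2 * \<beta> / s)) * B"
      unfolding tt by (intro mult_right_mono mult_left_mono) (auto simp: B_def)
    also have "\<dots> = Cw * (4 * p) powr (- 1 / s) / Cl\<^sup>2 * L powr (-2 * \<beta> / s)"
      by (simp add: B_def field_simps flip: exp_add)
    finally show ?thesis .
  qed
  have large: "(\<Sum>k\<in>{k\<in>{1..<n}. t < real k}. Ce * real k powr (-1 - 2 * \<beta>))
      \<le> Ce * (2 powr (2 * \<beta>) / (2 * \<beta>)) * (4 * p) powr (2 * \<beta> / s) * L powr (-2 * \<beta> / s)"
  proof -
    have "(\<Sum>k\<in>{k\<in>{1..<n}. t < real k}. Ce * real k powr (-1 - 2 * \<beta>))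
        \<le> Ce * ((2 powr (2 * \<beta>) / (2 * \<beta>)) * t powr (-(2 * \<beta>)))"
      using mult_left_mono[OF sum_powr_tail_le[of "2 * \<beta>" t n], of Ce] b t1 Ce
      by (simp add: sum_distrib_left algebra_simps)
    also have "t powr (-(2 * \<beta>)) = (4 * p) powr (2 * \<beta> / s) * L powr (-2 * \<beta> / s)"
      unfolding t_def using powr_powr_inverse_divide[OF Lpos D0 s0, of "-(2 * \<beta>)"] by simp
    finally show ?thesis by (simp add: mult_ac)
  qed
  show ?thesis using split small large by (simp add: algebra_simps)
qed

lemma rate_condition_exponential_prior:
  assumes b: "\<beta> > 0" and al: "\<alpha> > 0"
  shows "rate_condition a (\<lambda>n k. exp (- \<alpha> * real k powr s)) \<beta> (\<lambda>n. ln (real n) powr (- \<beta> / s))"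
proof -
  have s0: "s > 0" using s by simp
  obtain Cq where Cq: "Cq > 0" "\<forall>y::real\<ge>0. y powr (2 * \<beta> / s) \<le> Cq * exp (1/2 * y)"
    using powr_le_exp_bound[of "2 * \<beta> / s" "1/2"] b s0 by auto
  obtain Cw where Cw: "Cw > 0" "\<forall>y::real\<ge>0. y powr ((1 + 2 * \<beta>) / s) \<le> Cw * exp (1/2 * y)"
    using powr_le_exp_bound[of "(1 + 2 * \<beta>) / s" "1/2"] b s0 by auto
  obtain Ce where Ce: "Ce > 0" "\<forall>y::real\<ge>0. y powr (1 + 2 * \<beta>) \<le> Ce * exp (\<alpha> * y)"
    using powr_le_exp_bound[of "1 + 2 * \<beta>" \<alpha>] b al by auto
  define C where "C = (Cq / Cl\<^sup>2 + (2 * (2 * p + \<alpha>)) powr (2 * \<beta> / s))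
      + (Cw * (4 * p) powr (- 1 / s) / Cl\<^sup>2 + Ce * (2 powr (2 * \<beta>) / (2 * \<beta>)) * (4 * p) powr (2 * \<beta> / s)) + 1"
  have "filterlim (\<lambda>n. ln (real n)) at_top sequentially"
    by (rule filterlim_compose[OF ln_at_top filterlim_real_sequentially])
  then have "\<forall>\<^sub>F n in sequentially. max (4 * p) (2 * (2 * p + \<alpha>)) \<le> ln (real n)"
    unfolding filterlim_at_top by blast
  then have "\<forall>\<^sub>F n in sequentially. 0 < ln (real n) powr (- \<beta> / s)
    \<and> (\<forall>k\<in>{1..<n}. 1 / (real k powr (2 * \<beta>) * (1 + real n * (a k)\<^sup>2 * exp (- \<alpha> * real k powr s)))
        \<le> C * (ln (real n) powr (- \<beta> / s))\<^sup>2)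
    \<and> (\<Sum>k\<in>{1..<n}. post_var a (\<lambda>n k. exp (- \<alpha> * real k powr s)) n k) \<le> C * (ln (real n) powr (- \<beta> / s))\<^sup>2
    \<and> real n powr (-2 * \<beta>) \<le> C * (ln (real n) powr (- \<beta> / s))\<^sup>2"
    using eventually_ge_at_top[of 1]
  proof eventually_elim
    case (elim n)
    define L where "L = ln (real n)"
    have n1: "n \<ge> 1" and L4: "L \<ge> 4 * p" and L2: "L \<ge> 2 * (2 * p + \<alpha>)"
      using elim by (auto simp: L_def)
    have Lpos: "L > 0" using L4 p by simp
    have eL: "exp L = real n" using n1 by (simp add: L_def)
    have sq: "(L powr (- \<beta> / s))\<^sup>2 = L powr (-2 * \<beta> / s)"
      using Lpos by (simp add: power2_eq_square powr_add[symmetric])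
    have Lb0: "L powr (-2 * \<beta> / s) > 0" using Lpos by simp
    have Cq': "exp (- (1/2) * L) \<le> Cq * L powr (-2 * \<beta> / s)"
    proof -
      have "L powr (2 * \<beta> / s) * exp (- (1/2) * L) \<le> Cq * exp (1/2 * L) * exp (- (1/2) * L)"
        using Cq(2) Lpos by (intro mult_right_mono) auto
      then show ?thesis using Lpos by (simp add: powr_minus_divide field_simps flip: exp_add)
    qed
    have c1: "0 \<le> Cq / Cl\<^sup>2 + (2 * (2 * p + \<alpha>)) powr (2 * \<beta> / s)" using Cq by simp
    have c2: "0 \<le> Cw * (4 * p) powr (- 1 / s) / Cl\<^sup>2 + Ce * (2 powr (2 * \<beta>) / (2 * \<beta>)) * (4 * p) powr (2 * \<beta> / s)"
      using Cw Ce b by simp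
    have le_C: "c * L powr (-2 * \<beta> / s) \<le> C * L powr (-2 * \<beta> / s)" if "c \<le> C" for c
      using that Lb0 by (intro mult_right_mono) auto
    have "real n powr (-2 * \<beta>) = (real n powr s) powr (-2 * \<beta> / s)" using s0 by (simp add: powr_powr)
    also have "\<dots> \<le> L powr (-2 * \<beta> / s)"
    proof (intro powr_mono2')
      have "L \<le> real n" using ln_le_minus_one[of "real n"] n1 by (simp add: L_def)
      also have "real n \<le> real n powr s" using powr_mono[of 1 s "real n"] n1 s by simp
      finally show "L \<le> real n powr s" .
    qed (use Lpos b s0 in \<open>auto simp: divide_nonpos_pos\<close>)
    finally have N: "real n powr (-2 * \<beta>) \<le> C * L powr (-2 * \<beta> / s)"
      using le_C[of 1] c1 c2 by (simp add: C_def)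
    have Cw': "L powr ((1 + 2 * \<beta>) / s) \<le> Cw * exp (1/2 * L)" using Cw(2) Lpos by simp
    have A: "1 / (real k powr (2 * \<beta>) * (1 + real n * (a k)\<^sup>2 * exp (- \<alpha> * real k powr s)))
        \<le> C * L powr (-2 * \<beta> / s)" if k: "k \<in> {1..<n}" for k
      by (rule order.trans[OF exponential_prior_shrinkage_le[OF b al k eL L2 Cq(1) Cq'] le_C])
        (use c2 in \<open>simp add: C_def\<close>)
    have B: "(\<Sum>k\<in>{1..<n}. post_var a (\<lambda>n k. exp (- \<alpha> * real k powr s)) n k)
        \<le> C * L powr (-2 * \<beta> / s)"
      by (rule order.trans[OF exponential_prior_variance_le[OF b al n1 eL L4 Cw' Ce] le_C])
        (use c1 in \<open>simp add: C_def\<close>)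
    show ?case unfolding L_def[symmetric] sq using A B N Lpos by simp
  qed
  then show ?thesis unfolding rate_condition_def by blast
qed

end

section \<open>The special cases of the scaling\<close>

lemma ln_sq_mult_ge_of_lower_bound:
  fixes \<rho> C1 \<delta> :: real and n :: nat
  assumes n: "n \<ge> 2" and C1: "C1 > 0" and lo: "real n powr (-1/2 + \<delta>) \<le> C1 * \<rho>"
  shows "2 * \<delta> * ln (real n) - 2 * ln C1 \<le> ln (\<rho>\<^sup>2 * real n)"
proof -
  have np: "real n > 0" using n by simp
  have r0: "real n powr (-1/2 + \<delta>) / C1 > 0" using C1 np by simp
  have "real n powr (-1/2 + \<delta>) / C1 \<le> \<rho>" using lo C1 by (simp add: divide_le_eq mult.commute)
  then have le: "(real n powr (-1/2 + \<delta>) / C1)\<^sup>2 * real n \<le> \<rho>\<^sup>2 * real n"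
    using r0 np by (intro mult_right_mono power_mono) auto
  have eq: "(real n powr (-1/2 + \<delta>) / C1)\<^sup>2 * real n = real n powr (2 * \<delta>) / C1\<^sup>2"
  proof -
    have "(real n powr (-1/2 + \<delta>))\<^sup>2 * real n
        = real n powr (-1/2 + \<delta>) * real n powr (-1/2 + \<delta>) * real n powr 1"
      using np by (simp add: power2_eq_square)
    also have "\<dots> = real n powr ((-1/2 + \<delta>) + (-1/2 + \<delta>) + 1)"
      by (simp only: powr_add[symmetric])
    also have "(-1/2 + \<delta>) + (-1/2 + \<delta>) + 1 = 2 * \<delta>" by simp
    finally show ?thesis by (simp add: power_divide)
  qed
  have ge: "real n powr (2 * \<delta>) / C1\<^sup>2 \<le> \<rho>\<^sup>2 * real n" using le unfolding eq .
  have "real n powr (2 * \<delta>) / C1\<^sup>2 > 0" using np C1 by simp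
  then have "ln (real n powr (2 * \<delta>) / C1\<^sup>2) \<le> ln (\<rho>\<^sup>2 * real n)" using ge by simp
  then show ?thesis using np C1 by (simp add: ln_div ln_powr ln_mult power2_eq_square)
qed

lemma max_rate_le_log_rate:
  fixes L L' r \<delta> C2 :: real
  assumes L': "1 \<le> L'" and LL: "\<delta> * L' \<le> L" and de: "\<delta> > 0" and r: "r > 0"
    and up: "r \<le> C2 * L' powr ((\<alpha> - \<beta>) / s)" and C2: "C2 > 0"
    and al: "\<alpha> > 0" and b: "\<beta> > 0" and s: "s > 0"
  shows "max (L powr (- \<beta> / s)) (r * L powr (- \<alpha> / s))
           \<le> max (\<delta> powr (- \<beta> / s)) (C2 * \<delta> powr (- \<alpha> / s)) * L' powr (- \<beta> / s)"
proof -
  have dL: "\<delta> * L' > 0" using L' de by simp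
  have scale: "L powr (- \<gamma> / s) \<le> \<delta> powr (- \<gamma> / s) * L' powr (- \<gamma> / s)" if "\<gamma> > 0" for \<gamma>
  proof -
    have "L powr (- \<gamma> / s) \<le> (\<delta> * L') powr (- \<gamma> / s)"
      using LL dL that s by (intro powr_mono2') (auto simp: divide_nonpos_pos)
    also have "\<dots> = \<delta> powr (- \<gamma> / s) * L' powr (- \<gamma> / s)" using de L' by (simp add: powr_mult)
    finally show ?thesis .
  qed
  have "r * L powr (- \<alpha> / s) \<le> (C2 * L' powr ((\<alpha> - \<beta>) / s)) * (\<delta> powr (- \<alpha> / s) * L' powr (- \<alpha> / s))"
    using up scale[OF al] r by (intro mult_mono) auto
  also have "\<dots> = C2 * \<delta> powr (- \<alpha> / s) * L' powr (- \<beta> / s)"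
    using L' by (simp add: mult_ac diff_divide_distrib flip: powr_add)
  finally have "r * L powr (- \<alpha> / s) \<le> C2 * \<delta> powr (- \<alpha> / s) * L' powr (- \<beta> / s)" .
  then show ?thesis using scale[OF b]
    by (auto simp: max_def mult_right_mono intro: order.trans)
qed

context exp_lower_bound
begin

lemma rate_condition_unscaled_polynomial_prior:
  assumes b: "\<beta> > 0" and al: "\<alpha> > 0"
  shows "rate_condition a (\<lambda>n k. real k powr (-1 - 2 * \<alpha>)) \<beta> (\<lambda>n. ln (real n) powr (- min \<alpha> \<beta> / s))"
proof (rule rate_condition_mono)
  show "rate_condition a (\<lambda>n k. real k powr (-1 - 2 * \<alpha>)) \<beta>
      (\<lambda>n. max (ln (real n) powr (- \<beta> / s)) (ln (real n) powr (- \<alpha> / s)))"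
    using rate_condition_polynomial_prior[OF b al, of "\<lambda>_. 1"] filterlim_real_sequentially by simp
  have "\<forall>\<^sub>F n in sequentially. 1 \<le> ln (real n)"
    using filterlim_compose[OF ln_at_top filterlim_real_sequentially]
    unfolding filterlim_at_top by blast
  then show "\<forall>\<^sub>F n in sequentially. max (ln (real n) powr (- \<beta> / s)) (ln (real n) powr (- \<alpha> / s))
      \<le> 1 * ln (real n) powr (- min \<alpha> \<beta> / s)"
    by eventually_elim (use s in \<open>auto intro!: powr_mono divide_right_mono\<close>)
qed simp

lemma rate_condition_moderate_polynomial_prior:
  fixes \<rho> :: "nat \<Rightarrow> real"
  assumes b: "\<beta> > 0" and al: "\<alpha> > 0" and de: "\<delta> > 0" and rho: "\<forall>n. \<rho> n > 0"
    and lo: "\<exists>C>0. \<forall>n\<ge>2. real n powr (-1/2 + \<delta>) \<le> C * \<rho> n"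
    and up: "\<exists>C>0. \<forall>n\<ge>2. \<rho> n \<le> C * ln (real n) powr ((\<alpha> - \<beta>) / s)"
  shows "rate_condition a (\<lambda>n k. (\<rho> n)\<^sup>2 * real k powr (-1 - 2 * \<alpha>)) \<beta> (\<lambda>n. ln (real n) powr (- \<beta> / s))"
proof -
  have s0: "s > 0" using s by simp
  obtain C1 where C1: "C1 > 0" "\<forall>n\<ge>2. real n powr (-1/2 + \<delta>) \<le> C1 * \<rho> n" using lo by blast
  obtain C2 where C2: "C2 > 0" "\<forall>n\<ge>2. \<rho> n \<le> C2 * ln (real n) powr ((\<alpha> - \<beta>) / s)" using up by blast
  have Llim: "filterlim (\<lambda>n. ln (real n)) at_top sequentially"
    by (rule filterlim_compose[OF ln_at_top filterlim_real_sequentially])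
  have "\<forall>\<^sub>F n in sequentially. max 1 (2 * ln C1 / \<delta>) \<le> ln (real n)"
    using Llim unfolding filterlim_at_top by blast
  then have evL: "\<forall>\<^sub>F n in sequentially. \<delta> * ln (real n) \<le> ln ((\<rho> n)\<^sup>2 * real n) \<and> 1 \<le> ln (real n)"
    using eventually_ge_at_top[of 2]
  proof eventually_elim
    case (elim n)
    then have "2 * ln C1 \<le> \<delta> * ln (real n)" using de by (simp add: divide_le_eq mult.commute)
    then show ?case using ln_sq_mult_ge_of_lower_bound[of n C1 \<delta> "\<rho> n"] C1 elim by auto
  qed
  have "\<forall>\<^sub>F n in sequentially. \<delta> * ln (real n) \<le> ln ((\<rho> n)\<^sup>2 * real n)"
    using evL by (rule eventually_mono) simp
  then have "filterlim (\<lambda>n. ln ((\<rho> n)\<^sup>2 * real n)) at_top sequentially"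
    by (rule filterlim_at_top_mono[OF filterlim_tendsto_pos_mult_at_top[OF tendsto_const de Llim]])
  then have X: "filterlim (\<lambda>n. exp (ln ((\<rho> n)\<^sup>2 * real n))) at_top sequentially"
    by (rule filterlim_compose[OF exp_at_top])
  have Ev: "\<forall>\<^sub>F n in sequentially. exp (ln ((\<rho> n)\<^sup>2 * real n)) = (\<rho> n)\<^sup>2 * real n"
    using eventually_ge_at_top[of 1]
  proof eventually_elim
    case (elim n)
    have "0 < (\<rho> n)\<^sup>2" using rho[rule_format, of n] by simp
    then show ?case using elim by simp
  qed
  have rlim: "filterlim (\<lambda>n. (\<rho> n)\<^sup>2 * real n) at_top sequentially"
    using X filterlim_cong[OF refl refl Ev] by blast
  have "\<forall>\<^sub>F n in sequentially. max (ln ((\<rho> n)\<^sup>2 * real n) powr (- \<beta> / s))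
      (\<rho> n * ln ((\<rho> n)\<^sup>2 * real n) powr (- \<alpha> / s))
      \<le> max (\<delta> powr (- \<beta> / s)) (C2 * \<delta> powr (- \<alpha> / s)) * ln (real n) powr (- \<beta> / s)"
    using evL eventually_ge_at_top[of 2]
  proof eventually_elim
    case (elim n)
    show ?case by (rule max_rate_le_log_rate) (use elim C2 rho de al b s0 in auto)
  qed
  moreover have "max (\<delta> powr (- \<beta> / s)) (C2 * \<delta> powr (- \<alpha> / s)) > 0"
    using de by (simp add: less_max_iff_disj)
  ultimately show ?thesis
    by (intro rate_condition_mono[OF rate_condition_polynomial_prior[OF b al rho rlim]])
qed

end

theorem mainTheorem3:
  fixes a :: "nat \<Rightarrow> real" and \<psi> :: "nat \<Rightarrow> real \<Rightarrow> real" and p s \<beta> :: real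
  assumes a_pos: "\<forall>k\<ge>1. a k > 0"
    and design: "design_cond \<psi>"
    and Af_def: "\<forall>f. in_Sb \<beta> f \<longrightarrow> (\<forall>x\<in>{0..1}. summable (\<lambda>j. f (Suc j) * a (Suc j) * \<psi> (Suc j) x))"
    and p_pos: "p > 0" and s_ge: "s \<ge> 1"
    and a_rate: "a \<in> \<Theta>(\<lambda>k. exp (- p * real k powr s))"
    and beta_pos: "\<beta> > 0"
  shows
    "(\<forall>\<alpha>>0. \<forall>\<rho> :: nat \<Rightarrow> real. (\<forall>n. \<rho> n > 0) \<longrightarrow>
        filterlim (\<lambda>n. (\<rho> n)\<^sup>2 * real n) at_top sequentially \<longrightarrow>
        (\<forall>K>0. \<forall>M :: nat \<Rightarrow> real. filterlim M at_top sequentially \<longrightarrow>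
          contracts a \<psi> \<beta> (\<lambda>n k. (\<rho> n)\<^sup>2 * real k powr (-1 - 2 * \<alpha>))
            (\<lambda>n. max (ln ((\<rho> n)\<^sup>2 * real n) powr (- \<beta> / s))
                      (\<rho> n * ln ((\<rho> n)\<^sup>2 * real n) powr (- \<alpha> / s))) M K))
   \<and> (\<forall>\<alpha>>0. \<forall>K>0. \<forall>M :: nat \<Rightarrow> real. filterlim M at_top sequentially \<longrightarrow>
          contracts a \<psi> \<beta> (\<lambda>n k. real k powr (-1 - 2 * \<alpha>))
            (\<lambda>n. ln (real n) powr (- min \<alpha> \<beta> / s)) M K)
   \<and> (\<forall>\<alpha>>0. \<forall>\<rho> :: nat \<Rightarrow> real. \<forall>\<delta>>0. (\<forall>n. \<rho> n > 0) \<longrightarrow>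
        (\<exists>C>0. \<forall>n\<ge>2. real n powr (-1/2 + \<delta>) \<le> C * \<rho> n) \<longrightarrow>
        (\<exists>C>0. \<forall>n\<ge>2. \<rho> n \<le> C * ln (real n) powr ((\<alpha> - \<beta>) / s)) \<longrightarrow>
        (\<forall>K>0. \<forall>M :: nat \<Rightarrow> real. filterlim M at_top sequentially \<longrightarrow>
          contracts a \<psi> \<beta> (\<lambda>n k. (\<rho> n)\<^sup>2 * real k powr (-1 - 2 * \<alpha>))
            (\<lambda>n. ln (real n) powr (- \<beta> / s)) M K))
   \<and> (\<forall>\<alpha>>0. \<forall>K>0. \<forall>M :: nat \<Rightarrow> real. filterlim M at_top sequentially \<longrightarrow>
          contracts a \<psi> \<beta> (\<lambda>n k. exp (- \<alpha> * real k powr s))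
            (\<lambda>n. ln (real n) powr (- \<beta> / s)) M K)"
proof -
  obtain Cl Cu where Cl: "Cl > 0" and Cu: "Cu > 0"
    and ab: "\<forall>k\<ge>1. Cl * exp (- p * real k powr s) \<le> a k \<and> a k \<le> Cu * exp (- p * real k powr s)"
    using bigtheta_imp_uniform_bounds[OF a_pos _ a_rate] by auto
  interpret exp_decay a p s Cl Cu using p_pos s_ge Cl Cu ab by unfold_locales auto
  have contracts: "contracts a \<psi> \<beta> lam eps M K"
    if "\<And>n k. 1 \<le> k \<Longrightarrow> lam n k > 0" "rate_condition a lam \<beta> eps" "K > 0"
      "filterlim M at_top sequentially" for lam eps M K
    using contracts_if_rate_condition[OF design Af_def beta_pos] that by blast
  have prior_pos: "0 < (\<rho> n)\<^sup>2 * real k powr (-1 - 2 * \<alpha>)"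
    if "\<forall>n. \<rho> n > 0" "1 \<le> k" for \<rho> :: "nat \<Rightarrow> real" and n k \<alpha>
    using that(1)[rule_format, of n] that(2) by simp
  show ?thesis
    by (intro conjI allI impI; rule contracts;
        (rule rate_condition_polynomial_prior rate_condition_unscaled_polynomial_prior
          rate_condition_moderate_polynomial_prior rate_condition_exponential_prior)?)
      (auto simp: prior_pos beta_pos)
qed

end
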